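(* Let $n\geq 5$, let $S$ be the set of all $3$-cycles in $S_n$, and let $CAG_n=\mathrm{Cay}(A_n,S)$. Then $|\mathrm{Aut}(CAG_n)|\leq (n!)^2$.
   Context: For a finite group $\Gamma$ and a subset $T\subseteq\Gamma$ with $e\notin T$ and $T=T^{-1}$, the Cayley graph $\mathrm{Cay}(\Gamma,T)$ is the undirected graph with vertex set $\Gamma$ and edge set $\{\{\gamma,t\gamma\}\mid \gamma\in\Gamma, t\in T\}$. *)

theory Defs
  imports "HOL-Combinatorics.Combinatorics"
begin

definition alt_group :: "nat \<Rightarrow> (nat \<Rightarrow> nat) set" where
  "alt_group n = {p. p permutes {1..n} \<and> evenperm p}"

definition three_cycles :: "nat \<Rightarrow> (nat \<Rightarrow> nat) set" where
  "three_cycles n = {cycle_of_list [a, b, c] | a b c.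
      a \<in> {1..n} \<and> b \<in> {1..n} \<and> c \<in> {1..n} \<and> distinct [a, b, c]}"

definition cay_adj :: "('a \<Rightarrow> 'a) set \<Rightarrow> ('a \<Rightarrow> 'a) \<Rightarrow> ('a \<Rightarrow> 'a) \<Rightarrow> bool" where
  "cay_adj T x y \<longleftrightarrow> (\<exists>t\<in>T. y = t \<circ> x)"

text \<open>Automorphisms of a graph with vertex set V and adjacency relation adj:
  adjacency-preserving bijections of V (extended by the identity outside V so that
  they are uniquely represented as HOL functions).\<close>
definition graph_auts :: "'v set \<Rightarrow> ('v \<Rightarrow> 'v \<Rightarrow> bool) \<Rightarrow> ('v \<Rightarrow> 'v) set" where
  "graph_auts V adj = {f. bij_betw f V V \<and> (\<forall>x. x \<notin> V \<longrightarrow> f x = x) \<and>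
      (\<forall>x\<in>V. \<forall>y\<in>V. adj x y \<longleftrightarrow> adj (f x) (f y))}"

end

theory Submission
  imports Defs
begin

text \<open>
  Adjacency in \<open>CAG\<^sub>n\<close> means differing in exactly three points, so right translations and
  conjugations by \<open>S\<^sub>n\<close>, possibly composed with inversion, are automorphisms, and it suffices to
  study automorphisms fixing the identity. Such an automorphism permutes the neighbourhood \<open>S\<close> of
  the identity, and the graph on \<open>S\<close> sees both inverses (\<open>s\<close> and \<open>s\<^sup>-\<^sup>1\<close> are the adjacent pairs
  without common neighbour) and arcs: the 3-cycles mapping \<open>p\<close> to \<open>q\<close> form the set
  \<open>{s, t} \<union> N(s) \<inter> N(t)\<close> for any two of them. Hence the automorphism permutes arcs preserving
  consecutiveness and reversal, so it is induced by a permutation \<open>\<sigma>\<close> of the points, and on \<open>S\<close> it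
  is conjugation by \<open>\<sigma>\<close>, possibly composed with inversion. Finally an automorphism fixing the
  identity and \<open>S\<close> pointwise is trivial, by induction on the support, translating each newly
  reached vertex back to the identity. So every automorphism is determined by a pair of
  permutations, which gives the bound \<open>(n!)\<^sup>2\<close>.
\<close>

section \<open>Three-cycles and the alternating group\<close>

definition cycle3 :: "nat \<Rightarrow> nat \<Rightarrow> nat \<Rightarrow> nat \<Rightarrow> nat" where
  "cycle3 a b c = cycle_of_list [a, b, c]"

abbreviation cag_adj :: "nat \<Rightarrow> (nat \<Rightarrow> nat) \<Rightarrow> (nat \<Rightarrow> nat) \<Rightarrow> bool" where
  "cag_adj n \<equiv> cay_adj (three_cycles n)"

abbreviation cag_auts :: "nat \<Rightarrow> ((nat \<Rightarrow> nat) \<Rightarrow> (nat \<Rightarrow> nat)) set" where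
  "cag_auts n \<equiv> graph_auts (alt_group n) (cag_adj n)"

lemma cycle3_apply:
  assumes "distinct [a, b, c]"
  shows "cycle3 a b c x = (if x = a then b else if x = b then c else if x = c then a else x)"
  using assms by (auto simp: cycle3_def transpose_def)

lemma cycle3_permutes:
  assumes "distinct [a, b, c]" "a \<in> A" "b \<in> A" "c \<in> A"
  shows "cycle3 a b c permutes A"
proof -
  have "cycle3 a b c permutes set [a, b, c]" unfolding cycle3_def by (rule cycle_permutes)
  then show ?thesis by (rule permutes_subset) (use assms in auto)
qed

lemma evenperm_cycle3: "distinct [a, b, c] \<Longrightarrow> evenperm (cycle3 a b c)"
proof -
  assume "distinct [a, b, c]"
  moreover have "cycle3 a b c = transpose a b \<circ> transpose b c" by (simp add: cycle3_def)
  ultimately show ?thesis by (simp add: evenperm_comp evenperm_swap permutation_swap_id)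
qed

lemma cycle3_rotate: "distinct [a, b, c] \<Longrightarrow> cycle3 a b c = cycle3 b c a"
  by (auto simp: fun_eq_iff cycle3_apply)

lemma cycle3_comp_self: "distinct [a, b, c] \<Longrightarrow> cycle3 a b c \<circ> cycle3 a b c = cycle3 a c b"
  by (auto simp: fun_eq_iff cycle3_apply)

lemma inv_cycle3: "distinct [a, b, c] \<Longrightarrow> inv (cycle3 a b c) = cycle3 a c b"
  by (rule inv_unique_comp) (auto simp: fun_eq_iff cycle3_apply)

lemma support_cycle3: "distinct [a, b, c] \<Longrightarrow> {x. cycle3 a b c x \<noteq> x} = {a, b, c}"
  by (auto simp: cycle3_apply)

lemma cycle3_neq: "distinct [p, q, x] \<Longrightarrow> distinct [p, q, z] \<Longrightarrow> x \<noteq> z \<Longrightarrow> cycle3 p q x \<noteq> cycle3 p q z"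
  by (metis cycle3_apply)

lemma cycle3_eq_cases:
  assumes "distinct [a, b, c]" "distinct [a', b', c']" "cycle3 a b c = cycle3 a' b' c'"
  shows "(a' = a \<and> b' = b \<and> c' = c) \<or> (a' = b \<and> b' = c \<and> c' = a) \<or> (a' = c \<and> b' = a \<and> c' = b)"
proof -
  have "a' \<in> {x. cycle3 a b c x \<noteq> x}" using assms(2,3) by (simp add: support_cycle3)
  then have "a' \<in> {a, b, c}" using support_cycle3[OF assms(1)] by simp
  moreover have "b' = cycle3 a b c a'" "c' = cycle3 a b c b'" using assms(2,3) by (simp_all add: cycle3_apply)
  ultimately show ?thesis using assms(1) by (auto simp: cycle3_apply)
qed

lemma conj_cycle3:
  assumes "\<sigma> permutes A" "distinct [a, b, c]"
  shows "\<sigma> \<circ> cycle3 a b c \<circ> inv \<sigma> = cycle3 (\<sigma> a) (\<sigma> b) (\<sigma> c)"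
  using conjugation_of_cycle[of "[a, b, c]" \<sigma>] assms(2) permutes_bij[OF assms(1)]
  by (simp add: cycle3_def)

lemma three_cycles_iff: "s \<in> three_cycles n \<longleftrightarrow>
    (\<exists>a b c. distinct [a, b, c] \<and> a \<in> {1..n} \<and> b \<in> {1..n} \<and> c \<in> {1..n} \<and> s = cycle3 a b c)"
  unfolding three_cycles_def cycle3_def by blast

lemma three_cyclesE:
  assumes "s \<in> three_cycles n"
  obtains a b c where "distinct [a, b, c]" "a \<in> {1..n}" "b \<in> {1..n}" "c \<in> {1..n}" "s = cycle3 a b c"
  using assms unfolding three_cycles_iff by blast

lemma cycle3_in_three_cycles:
  "distinct [a, b, c] \<Longrightarrow> a \<in> {1..n} \<Longrightarrow> b \<in> {1..n} \<Longrightarrow> c \<in> {1..n} \<Longrightarrow> cycle3 a b c \<in> three_cycles n"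
  unfolding three_cycles_iff by blast

lemma alt_group_permutes: "x \<in> alt_group n \<Longrightarrow> x permutes {1..n}"
  by (simp add: alt_group_def)

lemma alt_group_bij: "x \<in> alt_group n \<Longrightarrow> bij x"
  using alt_group_permutes permutes_bij by blast

lemma alt_group_permutation: "x \<in> alt_group n \<Longrightarrow> permutation x"
  by (auto simp: alt_group_def intro: permutes_imp_permutation)

lemma id_in_alt_group: "id \<in> alt_group n"
  by (simp add: alt_group_def)

lemma alt_group_comp: "x \<in> alt_group n \<Longrightarrow> y \<in> alt_group n \<Longrightarrow> x \<circ> y \<in> alt_group n"
  using alt_group_permutation[of x n] alt_group_permutation[of y n]
  by (auto simp: alt_group_def evenperm_comp intro: permutes_compose)

lemma alt_group_inv: "x \<in> alt_group n \<Longrightarrow> inv x \<in> alt_group n"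
  using alt_group_permutation[of x n] by (auto simp: alt_group_def evenperm_inv intro: permutes_inv)

lemma evenperm_conj:
  assumes "permutation \<sigma>" "permutation x"
  shows "evenperm (\<sigma> \<circ> x \<circ> inv \<sigma>) = evenperm x"
  using assms by (simp add: evenperm_comp evenperm_inv permutation_compose permutation_inverse) blast

lemma alt_group_conj:
  assumes "\<sigma> permutes {1..n}" "x \<in> alt_group n"
  shows "\<sigma> \<circ> x \<circ> inv \<sigma> \<in> alt_group n"
proof -
  have "permutation \<sigma>" using assms(1) by (auto intro: permutes_imp_permutation)
  then show ?thesis using assms alt_group_permutation[OF assms(2)]
    by (auto simp: alt_group_def evenperm_conj intro!: permutes_compose permutes_inv)
qed

lemma three_cycle_in_alt_group: "s \<in> three_cycles n \<Longrightarrow> s \<in> alt_group n"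
  by (elim three_cyclesE) (auto simp: alt_group_def intro: cycle3_permutes evenperm_cycle3)

lemma three_cycle_inj: "s \<in> three_cycles n \<Longrightarrow> inj s"
  using alt_group_bij three_cycle_in_alt_group bij_is_inj by blast

lemma three_cycles_inv: "s \<in> three_cycles n \<Longrightarrow> inv s \<in> three_cycles n"
  by (elim three_cyclesE) (auto simp: inv_cycle3 intro!: cycle3_in_three_cycles)

lemma card_support_three_cycle: "s \<in> three_cycles n \<Longrightarrow> card {x. s x \<noteq> x} = 3"
  by (elim three_cyclesE) (simp add: support_cycle3)

lemma finite_support_three_cycle: "s \<in> three_cycles n \<Longrightarrow> finite {x. s x \<noteq> x}"
  using card_support_three_cycle card.infinite by fastforce

lemma card_eq_3_subset_eq:
  assumes "finite D" "card D = 3" "{a, b, c} \<subseteq> D" "distinct [a, b, c]"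
  shows "D = {a, b, c}"
proof -
  have "card {a, b, c} = 3" using assms(4) by simp
  then show ?thesis using assms(1-3) by (metis card_subset_eq)
qed

lemma cycle3_eqI:
  assumes "{x. p x \<noteq> x} \<subseteq> {a, b, c}" "distinct [a, b, c]" "p a = b" "p b = c" "p c = a"
  shows "p = cycle3 a b c"
  using assms by (auto simp: fun_eq_iff cycle3_apply)

lemma support_card_3_no_swap:
  assumes "inj p" "card {x. p x \<noteq> x} = 3" "p a \<noteq> a"
  shows "p (p a) \<noteq> a"
proof
  assume swap: "p (p a) = a"
  let ?D = "{x. p x \<noteq> x}"
  have "finite ?D" using assms(2) card.infinite by fastforce
  have "\<exists>d. d \<in> ?D \<and> d \<noteq> a \<and> d \<noteq> p a"
  proof (rule ccontr)
    assume "\<nexists>d. d \<in> ?D \<and> d \<noteq> a \<and> d \<noteq> p a"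
    then have "?D \<subseteq> {a, p a}" by auto
    then have "card ?D \<le> card {a, p a}" by (intro card_mono) auto
    also have "\<dots> \<le> 2" by (simp add: card_insert_if)
    finally show False using assms(2) by simp
  qed
  then obtain d where d: "d \<in> ?D" "d \<noteq> a" "d \<noteq> p a" by blast
  have "{a, p a, d} \<subseteq> ?D" using d assms(3) swap by auto
  moreover have "distinct [a, p a, d]" using d assms(3) by auto
  ultimately have "?D = {a, p a, d}" using card_eq_3_subset_eq[OF \<open>finite ?D\<close> assms(2)] by blast
  moreover have "p d \<noteq> a" using d(3) swap assms(1) by (metis injD)
  moreover have "p d \<noteq> p a" "p d \<noteq> d" using d by (auto simp: inj_eq[OF assms(1)])
  moreover have "p d \<in> ?D" using d by (auto simp: inj_eq[OF assms(1)])
  ultimately show False by auto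
qed

lemma three_cycle_of_card_support:
  assumes p: "p permutes {1..n}" and card: "card {x. p x \<noteq> x} = 3"
  shows "p \<in> three_cycles n"
proof -
  let ?D = "{x. p x \<noteq> x}"
  have fin: "finite ?D" using card card.infinite by fastforce
  have inj: "inj p" using p permutes_inj by blast
  have D_sub: "?D \<subseteq> {1..n}" using p unfolding permutes_def by blast
  have closed: "p x \<in> ?D" if "x \<in> ?D" for x
    using that inj by (metis (mono_tags) injD mem_Collect_eq)
  obtain a where a: "a \<in> ?D" using card by (metis card.empty ex_in_conv zero_neq_numeral)
  define b c where "b = p a" and "c = p b"
  have b: "b \<in> ?D" "b \<noteq> a" and c: "c \<in> ?D" "c \<noteq> b"
    using closed[OF a] closed[of b] a by (auto simp: b_def c_def)
  have "c \<noteq> a" using support_card_3_no_swap[OF inj card] a by (simp add: b_def c_def)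
  then have dist: "distinct [a, b, c]" using b c by auto
  have D: "?D = {a, b, c}" using card_eq_3_subset_eq[OF fin card _ dist] a b c by auto
  have "p c = a"
  proof -
    have "p c \<noteq> b" "p c \<noteq> c" using inj c \<open>c \<noteq> a\<close> by (auto simp: b_def dest: injD)
    then show ?thesis using closed[OF c(1)] D by auto
  qed
  then have "p = cycle3 a b c" using D dist by (intro cycle3_eqI) (auto simp: b_def c_def)
  moreover have "a \<in> {1..n}" "b \<in> {1..n}" "c \<in> {1..n}" using D D_sub by auto
  ultimately show ?thesis using dist by (simp add: cycle3_in_three_cycles)
qed

lemma three_cycles_iff_card_support:
  "p permutes {1..n} \<Longrightarrow> p \<in> three_cycles n \<longleftrightarrow> card {x. p x \<noteq> x} = 3"
  using three_cycle_of_card_support card_support_three_cycle by blast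

lemma three_cycle_eqI:
  assumes "u \<in> three_cycles n" "distinct [a, b, c]" "u a = b" "u b = c" "u c = a"
  shows "u = cycle3 a b c"
proof (rule cycle3_eqI[OF _ assms(2-5)])
  have "{x. u x \<noteq> x} = {a, b, c}"
    using card_eq_3_subset_eq[OF finite_support_three_cycle card_support_three_cycle] assms by auto
  then show "{x. u x \<noteq> x} \<subseteq> {a, b, c}" by simp
qed

lemma three_cycle_normal_form:
  assumes "s \<in> three_cycles n" "s p \<noteq> p"
  shows "distinct [p, s p, s (s p)] \<and> p \<in> {1..n} \<and> s p \<in> {1..n} \<and> s (s p) \<in> {1..n}
     \<and> s = cycle3 p (s p) (s (s p))"
  using assms(1)
proof (elim three_cyclesE)
  fix a b c assume *: "distinct [a, b, c]" "a \<in> {1..n}" "b \<in> {1..n}" "c \<in> {1..n}" "s = cycle3 a b c"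
  have "p \<in> {a, b, c}" using assms(2) *(1,5) by (auto simp: cycle3_apply split: if_splits)
  then show ?thesis using * by (auto simp: cycle3_apply intro: cycle3_rotate)
qed

lemma three_cycle_no_swap: "s \<in> three_cycles n \<Longrightarrow> s p \<noteq> p \<Longrightarrow> s (s p) \<noteq> p"
  using three_cycle_normal_form[of s n p] by auto

lemma three_cycle_moves_image: "s \<in> three_cycles n \<Longrightarrow> s p \<noteq> p \<Longrightarrow> s (s p) \<noteq> s p"
  using three_cycle_inj by (metis injD)

lemma three_cycle_moves_at_most_3:
  assumes s: "s \<in> three_cycles n" and "distinct [a, b, c, d]"
    and "s a \<noteq> a" "s b \<noteq> b" "s c \<noteq> c" "s d \<noteq> d"
  shows False
proof -
  have "{a, b, c, d} \<subseteq> {x. s x \<noteq> x}" using assms by auto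
  then have "card {a, b, c, d} \<le> 3"
    using card_support_three_cycle[OF s] finite_support_three_cycle[OF s] by (metis card_mono)
  with assms(2) show False by simp
qed

lemma exists_fresh: "length xs < n \<Longrightarrow> \<exists>z\<in>{1..n}. z \<notin> set xs"
  using card_length[of xs] card_mono[of "set xs" "{1..n}"] by fastforce

section \<open>Adjacency as Hamming distance\<close>

definition hamming :: "('a \<Rightarrow> 'b) \<Rightarrow> ('a \<Rightarrow> 'b) \<Rightarrow> nat" where
  "hamming x y = card {i. x i \<noteq> y i}"

lemma hamming_commute: "hamming x y = hamming y x"
  unfolding hamming_def by (metis (mono_tags))

lemma hamming_ne_3_of_4_diffs:
  assumes "distinct [i1, i2, i3, i4]" "x i1 \<noteq> y i1" "x i2 \<noteq> y i2" "x i3 \<noteq> y i3" "x i4 \<noteq> y i4"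
  shows "hamming x y \<noteq> 3"
proof (cases "finite {i. x i \<noteq> y i}")
  case True
  have "{i1, i2, i3, i4} \<subseteq> {i. x i \<noteq> y i}" using assms by auto
  then have "card {i1, i2, i3, i4} \<le> hamming x y" unfolding hamming_def using True by (rule card_mono[rotated])
  moreover have "card {i1, i2, i3, i4} = 4" using assms(1) by simp
  ultimately show ?thesis by simp
next
  case False then show ?thesis by (simp add: hamming_def)
qed

lemma card_image_inj: "inj f \<Longrightarrow> card (f ` A) = card A"
  by (rule card_image) (auto intro: inj_on_subset)

lemma image_bij_Collect:
  assumes "bij w" shows "w ` {i. P (w i)} = {j. P j}"
proof
  show "{j. P j} \<subseteq> w ` {i. P (w i)}"
  proof
    fix j assume "j \<in> {j. P j}"
    moreover have "w (inv w j) = j" using assms by (simp add: bij_is_surj surj_f_inv_f)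
    ultimately show "j \<in> w ` {i. P (w i)}" by (metis (mono_tags, lifting) image_eqI mem_Collect_eq)
  qed
qed auto

lemma hamming_comp_right:
  assumes "bij w" shows "hamming (x \<circ> w) (y \<circ> w) = hamming x y"
proof -
  have "hamming (x \<circ> w) (y \<circ> w) = card (w ` {i. x (w i) \<noteq> y (w i)})"
    unfolding hamming_def using assms by (simp add: card_image_inj bij_is_inj)
  also have "w ` {i. x (w i) \<noteq> y (w i)} = {j. x j \<noteq> y j}" by (rule image_bij_Collect[OF assms])
  finally show ?thesis by (simp add: hamming_def)
qed

lemma hamming_comp_left: "inj \<sigma> \<Longrightarrow> hamming (\<sigma> \<circ> x) (\<sigma> \<circ> y) = hamming x y"
  by (simp add: hamming_def inj_eq)

lemma hamming_conj: "bij \<sigma> \<Longrightarrow> hamming (\<sigma> \<circ> x \<circ> inv \<sigma>) (\<sigma> \<circ> y \<circ> inv \<sigma>) = hamming x y"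
  by (simp add: hamming_comp_left hamming_comp_right bij_imp_bij_inv bij_is_inj o_assoc[symmetric])

lemma hamming_inv:
  assumes x: "bij x" and y: "bij y" shows "hamming (inv x) (inv y) = hamming x y"
proof -
  have "{i. inv x i \<noteq> inv y i} = x ` {j. inv x (x j) \<noteq> inv y (x j)}"
    by (rule image_bij_Collect[OF x, symmetric])
  also have "{j. inv x (x j) \<noteq> inv y (x j)} = {j. x j \<noteq> y j}"
  proof -
    have "inv x (x j) = j" for j using x by (simp add: bij_is_inj inv_f_f)
    moreover have "(j = inv y (x j)) \<longleftrightarrow> x j = y j" for j using y by (metis bij_inv_eq_iff)
    ultimately show ?thesis by simp
  qed
  finally show ?thesis unfolding hamming_def using x by (simp add: card_image_inj bij_is_inj)
qed

lemma cay_adj_iff_comp_inv: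
  assumes "bij x" shows "cay_adj T x y \<longleftrightarrow> y \<circ> inv x \<in> T"
proof
  assume "cay_adj T x y"
  then obtain t where t: "t \<in> T" "y = t \<circ> x" by (auto simp: cay_adj_def)
  then have "y \<circ> inv x = t" using assms by (auto simp: fun_eq_iff surj_f_inv_f bij_is_surj)
  then show "y \<circ> inv x \<in> T" using t by simp
next
  assume "y \<circ> inv x \<in> T"
  moreover have "y = (y \<circ> inv x) \<circ> x" using assms by (auto simp: fun_eq_iff inv_f_f bij_is_inj)
  ultimately show "cay_adj T x y" unfolding cay_adj_def by blast
qed

lemma support_comp_inv:
  assumes "bij x" shows "{i. (y \<circ> inv x) i \<noteq> i} = x ` {i. x i \<noteq> y i}"
proof -
  have "x ` {i. x i \<noteq> y i} = x ` {i. y (inv x (x i)) \<noteq> x i}"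
    using assms by (simp add: bij_is_inj inv_f_f eq_commute)
  then show ?thesis using image_bij_Collect[OF assms, of "\<lambda>j. y (inv x j) \<noteq> j"] by simp
qed

lemma cag_adj_iff_hamming:
  assumes x: "x \<in> alt_group n" and y: "y \<in> alt_group n"
  shows "cag_adj n x y \<longleftrightarrow> hamming x y = 3"
proof -
  have bx: "bij x" using alt_group_bij[OF x] .
  have "y \<circ> inv x permutes {1..n}"
    using alt_group_permutes[OF x] alt_group_permutes[OF y] by (intro permutes_compose permutes_inv)
  then have "cag_adj n x y \<longleftrightarrow> card {i. (y \<circ> inv x) i \<noteq> i} = 3"
    by (simp add: cay_adj_iff_comp_inv[OF bx] three_cycles_iff_card_support)
  also have "card {i. (y \<circ> inv x) i \<noteq> i} = hamming x y" unfolding hamming_def support_comp_inv[OF bx]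
    using bx by (simp add: card_image_inj bij_is_inj)
  finally show ?thesis .
qed

lemma cag_adj_sym: "x \<in> alt_group n \<Longrightarrow> y \<in> alt_group n \<Longrightarrow> cag_adj n x y \<longleftrightarrow> cag_adj n y x"
  by (simp add: cag_adj_iff_hamming hamming_commute)

lemma cag_adj_irrefl: "x \<in> alt_group n \<Longrightarrow> \<not> cag_adj n x x"
  by (simp add: cag_adj_iff_hamming hamming_def)

section \<open>The neighbourhood of the identity\<close>

definition common_nbrs :: "nat \<Rightarrow> (nat \<Rightarrow> nat) \<Rightarrow> (nat \<Rightarrow> nat) \<Rightarrow> (nat \<Rightarrow> nat) set" where
  "common_nbrs n s t = {u \<in> three_cycles n. cag_adj n u s \<and> cag_adj n u t}"

lemma three_cycle_adj_inv:
  assumes "s \<in> three_cycles n" shows "cag_adj n s (inv s)"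
proof -
  obtain a b c where "distinct [a, b, c]" "s = cycle3 a b c" using assms by (rule three_cyclesE) blast
  then have "inv s = s \<circ> s" by (simp add: inv_cycle3 cycle3_comp_self)
  then show ?thesis using assms unfolding cay_adj_def by blast
qed

lemma adjacent_three_cycles_agree:
  assumes s: "s \<in> three_cycles n" and t: "t \<in> three_cycles n"
    and adj: "cag_adj n s t" and ne: "t \<noteq> inv s"
  shows "\<exists>i. s i \<noteq> i \<and> t i = s i"
proof (rule ccontr)
  assume disagree: "\<not> ?thesis"
  obtain a b c where abc: "distinct [a, b, c]" "s = cycle3 a b c"
    using s by (rule three_cyclesE) blast
  have sa: "s a = b" "s b = c" "s c = a" using abc by (auto simp: cycle3_apply)
  have "s a \<noteq> a" "s b \<noteq> b" "s c \<noteq> c" using sa abc(1) by auto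
  then have "t a \<noteq> s a" "t b \<noteq> s b" "t c \<noteq> s c" using disagree by blast+
  then have t_ne: "t a \<noteq> b" "t b \<noteq> c" "t c \<noteq> a" using sa by simp_all
  have "hamming s t = 3"
    using adj s t by (simp add: cag_adj_iff_hamming three_cycle_in_alt_group)
  then have "finite {i. s i \<noteq> t i}" "card {i. s i \<noteq> t i} = 3"
    unfolding hamming_def using card.infinite by fastforce+
  moreover have "{a, b, c} \<subseteq> {i. s i \<noteq> t i}" using t_ne sa by auto
  ultimately have diff: "{i. s i \<noteq> t i} = {a, b, c}" by (rule card_eq_3_subset_eq[OF _ _ _ abc(1)])
  have "t i = i" if i: "i \<notin> {a, b, c}" for i
  proof -
    have "s i = t i" using i diff by blast
    moreover have "s i = i" using i abc by (simp add: cycle3_apply)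
    ultimately show ?thesis by simp
  qed
  then have "{i. t i \<noteq> i} \<subseteq> {a, b, c}" by blast
  moreover have "card {a, b, c} = 3" using abc(1) by simp
  ultimately have supp: "{i. t i \<noteq> i} = {a, b, c}"
    using card_support_three_cycle[OF t] by (metis card_subset_eq finite.emptyI finite_insert)
  have closed: "t x \<in> {a, b, c} \<and> t x \<noteq> x" if "x \<in> {a, b, c}" for x
    using supp that three_cycle_moves_image[OF t, of x] by blast
  have "t a = c" using closed[of a] t_ne(1) by auto
  moreover have "t b = a" using closed[of b] t_ne(2) by auto
  moreover have "t c = b" using closed[of c] t_ne(3) by auto
  ultimately have "t = cycle3 a c b" using abc(1) by (intro three_cycle_eqI[OF t]) auto
  then show False using ne abc by (simp add: inv_cycle3)
qed

lemma no_common_nbr_of_inv: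
  assumes s: "s \<in> three_cycles n" and u: "u \<in> three_cycles n"
    and us: "cag_adj n u s" and us': "cag_adj n u (inv s)"
  shows False
proof -
  have si: "inv s \<in> three_cycles n" using three_cycles_inv[OF s] .
  have V: "s \<in> alt_group n" "u \<in> alt_group n" "inv s \<in> alt_group n"
    using s u si by (auto intro: three_cycle_in_alt_group)
  have "u \<noteq> inv s" using us' cag_adj_irrefl[OF V(2)] by blast
  moreover have "cag_adj n s u" using us cag_adj_sym V by blast
  ultimately obtain i where i: "s i \<noteq> i" "u i = s i"
    using adjacent_three_cycles_agree[OF s u] by blast
  have "u \<noteq> s" using us cag_adj_irrefl[OF V(2)] by blast
  then have "u \<noteq> inv (inv s)" using alt_group_bij[OF V(1)] by (simp add: bij_is_inj inv_inv_eq)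
  moreover have "cag_adj n (inv s) u" using us' cag_adj_sym V by blast
  ultimately obtain j where j: "inv s j \<noteq> j" "u j = inv s j"
    using adjacent_three_cycles_agree[OF si u] by blast
  obtain a b c where abc: "distinct [a, b, c]" "s = cycle3 a b c" using s by (rule three_cyclesE) blast
  have inv_s: "inv s = cycle3 a c b" using abc by (simp add: inv_cycle3)
  have "u a = b \<or> u b = c \<or> u c = a"
    using i abc by (auto simp: cycle3_apply split: if_splits)
  moreover have "u a = c \<or> u c = b \<or> u b = a"
    using j inv_s abc(1) by (auto simp: cycle3_apply split: if_splits)
  moreover have "x = y" if "u x = u y" for x y using three_cycle_inj[OF u] that by (metis injD)
  moreover have "u y \<noteq> x" if "x \<noteq> y" "u x = y" for x y
    using three_cycle_no_swap[OF u, of x] that by simp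
  ultimately show False using abc(1) by (metis distinct_length_2_or_more)
qed

lemma adjacent_if_same_arc:
  assumes s: "s \<in> three_cycles n" and t: "t \<in> three_cycles n"
    and "s p = q" "t p = q" "p \<noteq> q" "s \<noteq> t"
  shows "cag_adj n s t"
proof -
  obtain x y where "distinct [p, q, x]" "p \<in> {1..n}" "q \<in> {1..n}" "x \<in> {1..n}" "s = cycle3 p q x"
    and "distinct [p, q, y]" "y \<in> {1..n}" "t = cycle3 p q y"
    using three_cycle_normal_form[OF s, of p] three_cycle_normal_form[OF t, of p] assms(3-5) by auto
  moreover from this have "x \<noteq> y" using assms(6) by metis
  moreover have "cycle3 p q y = cycle3 p x y \<circ> cycle3 p q x" if "distinct [p, q, x, y]"
    using that by (auto simp: fun_eq_iff cycle3_apply)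
  ultimately have "t = cycle3 p x y \<circ> s" "cycle3 p x y \<in> three_cycles n"
    by (auto intro!: cycle3_in_three_cycles)
  then show ?thesis unfolding cay_adj_def by blast
qed

lemma inv_cycle3_not_adjacent:
  assumes "distinct [p, q, x, y]" "{p, q, x, y} \<subseteq> {1..n}"
  shows "\<not> cag_adj n (cycle3 p x q) (cycle3 p q y)"
proof -
  have "cycle3 p x q \<in> alt_group n" "cycle3 p q y \<in> alt_group n"
    using assms by (auto intro!: three_cycle_in_alt_group cycle3_in_three_cycles)
  moreover have "hamming (cycle3 p x q) (cycle3 p q y) \<noteq> 3"
    by (rule hamming_ne_3_of_4_diffs[of p q x y]) (use assms in \<open>auto simp: cycle3_apply\<close>)
  ultimately show ?thesis by (simp add: cag_adj_iff_hamming)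
qed

lemma common_nbr_maps_arc:
  assumes u: "u \<in> three_cycles n" and d: "distinct [p, q, x, y]" and r: "{p, q, x, y} \<subseteq> {1..n}"
    and us: "cag_adj n u (cycle3 p q x)" and ut: "cag_adj n u (cycle3 p q y)"
  shows "u p = q"
proof (rule ccontr)
  assume up: "u p \<noteq> q"
  have s: "cycle3 p q x \<in> three_cycles n" and t: "cycle3 p q y \<in> three_cycles n"
    using d r by (auto intro!: cycle3_in_three_cycles)
  have V: "u \<in> alt_group n" "cycle3 p q x \<in> alt_group n" "cycle3 p q y \<in> alt_group n"
    using u s t by (auto intro: three_cycle_in_alt_group)
  have "u \<noteq> inv (cycle3 p q x)"
    using ut inv_cycle3_not_adjacent[of p q x y n] d r by (auto simp: inv_cycle3)
  then obtain i where i: "cycle3 p q x i \<noteq> i" "u i = cycle3 p q x i"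
    using adjacent_three_cycles_agree[OF s u] us cag_adj_sym[OF V(1,2)] by blast
  have "u \<noteq> inv (cycle3 p q y)"
    using us inv_cycle3_not_adjacent[of p q y x n] d r by (auto simp: inv_cycle3)
  then obtain j where j: "cycle3 p q y j \<noteq> j" "u j = cycle3 p q y j"
    using adjacent_three_cycles_agree[OF t u] ut cag_adj_sym[OF V(1,3)] by blast
  have "u q = x \<or> u x = p" using i up d by (auto simp: cycle3_apply split: if_splits)
  moreover have "u q = y \<or> u y = p" using j up d by (auto simp: cycle3_apply split: if_splits)
  moreover have "u x \<noteq> u y" using d three_cycle_inj[OF u] by (auto dest: injD)
  moreover have False if A: "u q = x" "u y = p"
  proof -
    have "u x \<noteq> x" using three_cycle_moves_image[OF u, of q] A d by auto
    moreover have "u p \<noteq> p" using three_cycle_moves_image[OF u, of y] A d by auto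
    ultimately show False using three_cycle_moves_at_most_3[OF u, of q y x p] A d by auto
  qed
  moreover have False if A: "u x = p" "u q = y"
  proof -
    have "u p \<noteq> p" using three_cycle_moves_image[OF u, of x] A d by auto
    moreover have "u y \<noteq> y" using three_cycle_moves_image[OF u, of q] A d by auto
    ultimately show False using three_cycle_moves_at_most_3[OF u, of x q p y] A d by auto
  qed
  ultimately show False using d by auto
qed

lemma inv_iff_no_common_nbr:
  assumes n: "5 \<le> n" and s: "s \<in> three_cycles n" and t: "t \<in> three_cycles n"
  shows "t = inv s \<longleftrightarrow> cag_adj n s t \<and> common_nbrs n s t = {}"
proof
  assume "t = inv s"
  then show "cag_adj n s t \<and> common_nbrs n s t = {}"
    using three_cycle_adj_inv[OF s] no_common_nbr_of_inv[OF s] by (auto simp: common_nbrs_def)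
next
  assume st: "cag_adj n s t \<and> common_nbrs n s t = {}"
  show "t = inv s"
  proof (rule ccontr)
    assume "t \<noteq> inv s"
    then obtain p where p: "s p \<noteq> p" "t p = s p" using adjacent_three_cycles_agree[OF s t] st by blast
    define q where "q = s p"
    have "t \<noteq> s" using st cag_adj_irrefl[OF three_cycle_in_alt_group[OF s]] by blast
    have S: "distinct [p, q, s q] \<and> p \<in> {1..n} \<and> q \<in> {1..n} \<and> s q \<in> {1..n} \<and> s = cycle3 p q (s q)"
      using three_cycle_normal_form[OF s p(1)] unfolding q_def .
    have T: "distinct [p, q, t q] \<and> t q \<in> {1..n} \<and> t = cycle3 p q (t q)"
      using three_cycle_normal_form[OF t, of p] p unfolding q_def by simp
    obtain x y where S: "distinct [p, q, x]" "p \<in> {1..n}" "q \<in> {1..n}" "x \<in> {1..n}" "s = cycle3 p q x"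
      and T: "distinct [p, q, y]" "y \<in> {1..n}" "t = cycle3 p q y"
      using S T by blast
    obtain z where z: "z \<in> {1..n}" "z \<notin> set [p, q, x, y]" using exists_fresh[of "[p, q, x, y]" n] n by auto
    have u: "cycle3 p q z \<in> three_cycles n" using z S by (intro cycle3_in_three_cycles) auto
    have "cag_adj n (cycle3 p q z) s"
      by (rule adjacent_if_same_arc[OF u s, of p q])
        (use z S cycle3_neq[of p q z x] in \<open>auto simp: cycle3_apply\<close>)
    moreover have "cag_adj n (cycle3 p q z) t"
      by (rule adjacent_if_same_arc[OF u t, of p q])
        (use z S T cycle3_neq[of p q z y] in \<open>auto simp: cycle3_apply\<close>)
    ultimately show False using st u by (auto simp: common_nbrs_def)
  qed
qed

definition arcs :: "nat \<Rightarrow> (nat \<times> nat) set" where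
  "arcs n = {(p, q). p \<in> {1..n} \<and> q \<in> {1..n} \<and> p \<noteq> q}"

definition cycles_through :: "nat \<Rightarrow> nat \<times> nat \<Rightarrow> (nat \<Rightarrow> nat) set" where
  "cycles_through n \<alpha> = {s \<in> three_cycles n. s (fst \<alpha>) = snd \<alpha>}"

lemma swap_arcs: "\<alpha> \<in> arcs n \<Longrightarrow> prod.swap \<alpha> \<in> arcs n"
  by (cases \<alpha>) (auto simp: arcs_def)

lemma cycles_through_subset: "cycles_through n \<alpha> \<subseteq> three_cycles n"
  by (auto simp: cycles_through_def)

lemma cycle3_in_cycles_through:
  "distinct [p, q, x] \<Longrightarrow> {p, q, x} \<subseteq> {1..n} \<Longrightarrow> cycle3 p q x \<in> cycles_through n (p, q)"
  by (auto simp: cycles_through_def cycle3_apply intro!: cycle3_in_three_cycles)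

lemma three_cycle_in_cycles_through:
  "s \<in> three_cycles n \<Longrightarrow> s a \<noteq> a \<Longrightarrow> s \<in> cycles_through n (a, s a) \<and> (a, s a) \<in> arcs n"
  using three_cycle_normal_form[of s n a] by (auto simp: cycles_through_def arcs_def)

lemma cycles_through_eq_common_nbrs:
  assumes "(p, q) \<in> arcs n" "s \<in> cycles_through n (p, q)" "t \<in> cycles_through n (p, q)" "s \<noteq> t"
  shows "cycles_through n (p, q) = {s, t} \<union> common_nbrs n s t"
proof (intro equalityI subsetI)
  have s: "s \<in> three_cycles n" "s p = q" and t: "t \<in> three_cycles n" "t p = q" and "p \<noteq> q"
    using assms by (auto simp: cycles_through_def arcs_def)
  fix u
  show "u \<in> {s, t} \<union> common_nbrs n s t" if u: "u \<in> cycles_through n (p, q)"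
  proof (cases "u = s \<or> u = t")
    case False
    have "u \<in> three_cycles n" "u p = q" using u by (auto simp: cycles_through_def)
    then show ?thesis
      using adjacent_if_same_arc[OF _ s(1) _ s(2) \<open>p \<noteq> q\<close>] adjacent_if_same_arc[OF _ t(1) _ t(2) \<open>p \<noteq> q\<close>]
        False by (auto simp: common_nbrs_def)
  qed auto
  show "u \<in> cycles_through n (p, q)" if u: "u \<in> {s, t} \<union> common_nbrs n s t"
  proof (cases "u \<in> {s, t}")
    case False
    then have u3: "u \<in> three_cycles n" "cag_adj n u s" "cag_adj n u t"
      using u by (auto simp: common_nbrs_def)
    obtain x where S: "distinct [p, q, x]" "{p, q, x} \<subseteq> {1..n}" "s = cycle3 p q x"
      using three_cycle_normal_form[OF s(1), of p] s(2) \<open>p \<noteq> q\<close> by auto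
    obtain y where T: "distinct [p, q, y]" "y \<in> {1..n}" "t = cycle3 p q y"
      using three_cycle_normal_form[OF t(1), of p] t(2) \<open>p \<noteq> q\<close> by auto
    have "x \<noteq> y" using S T assms(4) by metis
    then have "u p = q" using S T u3 by (intro common_nbr_maps_arc[OF u3(1), of p q x y]) auto
    then show ?thesis using u3 by (simp add: cycles_through_def)
  qed (use assms in auto)
qed

lemma cycles_through_inj:
  assumes n: "5 \<le> n" and "\<alpha> \<in> arcs n" "\<beta> \<in> arcs n" "cycles_through n \<alpha> = cycles_through n \<beta>"
  shows "\<alpha> = \<beta>"
proof -
  obtain p q p' q' where pq: "\<alpha> = (p, q)" "p \<in> {1..n}" "q \<in> {1..n}" "p \<noteq> q"
    and pq': "\<beta> = (p', q')" "p' \<noteq> q'" using assms(2,3) by (auto simp: arcs_def)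
  obtain x where x: "x \<in> {1..n}" "x \<notin> set [p, q]" using exists_fresh[of "[p, q]" n] n by auto
  obtain y where y: "y \<in> {1..n}" "y \<notin> set [p, q, x]" using exists_fresh[of "[p, q, x]" n] n by auto
  have "cycle3 p q x \<in> cycles_through n \<beta>" "cycle3 p q y \<in> cycles_through n \<beta>"
    using cycle3_in_cycles_through[of p q x n] cycle3_in_cycles_through[of p q y n] x y pq assms(4)
    by auto
  then have "cycle3 p q x p' = q'" "cycle3 p q y p' = q'" using pq' by (auto simp: cycles_through_def)
  moreover have d: "distinct [p, q, x]" "distinct [p, q, y]" "x \<noteq> y" using x y pq by auto
  ultimately have "p' = p \<and> q' = q"
    using pq'(2) unfolding cycle3_apply[OF d(1)] cycle3_apply[OF d(2)] by (auto split: if_splits)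
  then show ?thesis using pq pq' by simp
qed

lemma inv_image_cycles_through: "inv ` cycles_through n \<alpha> \<subseteq> cycles_through n (prod.swap \<alpha>)"
  by (auto simp: cycles_through_def three_cycles_inv intro: inv_f_eq three_cycle_inj)

lemma cycles_through_swap: "cycles_through n (prod.swap \<alpha>) = inv ` cycles_through n \<alpha>"
proof
  have "inv (inv s) = s" if "s \<in> cycles_through n (prod.swap \<alpha>)" for s
    using that alt_group_bij[OF three_cycle_in_alt_group] inv_inv_eq by (auto simp: cycles_through_def)
  then have "cycles_through n (prod.swap \<alpha>) = inv ` inv ` cycles_through n (prod.swap \<alpha>)"
    by (simp add: image_image)
  also have "\<dots> \<subseteq> inv ` cycles_through n \<alpha>"
    using inv_image_cycles_through[of n "prod.swap \<alpha>"] by (intro image_mono) simp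
  finally show "cycles_through n (prod.swap \<alpha>) \<subseteq> inv ` cycles_through n \<alpha>" .
qed (rule inv_image_cycles_through)

section \<open>Maps of arcs\<close>

definition consecutive_arcs :: "nat \<times> nat \<Rightarrow> nat \<times> nat \<Rightarrow> bool" where
  "consecutive_arcs \<alpha> \<beta> \<longleftrightarrow>
     (snd \<alpha> = fst \<beta> \<and> snd \<beta> \<noteq> fst \<alpha>) \<or> (snd \<beta> = fst \<alpha> \<and> fst \<beta> \<noteq> snd \<alpha>)"

definition arcs_share_end :: "nat \<times> nat \<Rightarrow> nat \<times> nat \<Rightarrow> bool" where
  "arcs_share_end \<alpha> \<beta> \<longleftrightarrow> \<alpha> \<noteq> \<beta> \<and> (fst \<alpha> = fst \<beta> \<or> snd \<alpha> = snd \<beta>)"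

lemma arcs_share_end_iff_consecutive_swap:
  "\<alpha> \<in> arcs n \<Longrightarrow> \<beta> \<in> arcs n \<Longrightarrow> arcs_share_end \<alpha> \<beta> \<longleftrightarrow> consecutive_arcs (prod.swap \<alpha>) \<beta>"
  by (cases \<alpha>; cases \<beta>) (auto simp: arcs_share_end_def consecutive_arcs_def arcs_def)

lemma consecutive_arcs_swap:
  "consecutive_arcs (prod.swap \<alpha>) (prod.swap \<beta>) \<longleftrightarrow> consecutive_arcs \<alpha> \<beta>"
  by (cases \<alpha>; cases \<beta>) (auto simp: consecutive_arcs_def)

lemma consecutive_arcs_iff_common_cycle:
  assumes "\<alpha> \<in> arcs n" "\<beta> \<in> arcs n"
  shows "consecutive_arcs \<alpha> \<beta> \<longleftrightarrow> cycles_through n \<alpha> \<inter> cycles_through n \<beta> \<noteq> {} \<and> \<alpha> \<noteq> \<beta>"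
proof -
  obtain p q c d where pq: "\<alpha> = (p, q)" "p \<in> {1..n}" "q \<in> {1..n}" "p \<noteq> q"
    and cd: "\<beta> = (c, d)" "c \<in> {1..n}" "d \<in> {1..n}" "c \<noteq> d"
    using assms by (auto simp: arcs_def)
  have "consecutive_arcs \<alpha> \<beta> \<longleftrightarrow> (q = c \<and> d \<noteq> p) \<or> (d = p \<and> c \<noteq> q)"
    using pq cd by (simp add: consecutive_arcs_def)
  also have "\<dots> \<longleftrightarrow> cycles_through n \<alpha> \<inter> cycles_through n \<beta> \<noteq> {} \<and> \<alpha> \<noteq> \<beta>"
  proof
    assume "(q = c \<and> d \<noteq> p) \<or> (d = p \<and> c \<noteq> q)"
    then show "cycles_through n \<alpha> \<inter> cycles_through n \<beta> \<noteq> {} \<and> \<alpha> \<noteq> \<beta>"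
    proof
      assume h: "q = c \<and> d \<noteq> p"
      then have "cycle3 p q d \<in> cycles_through n \<alpha> \<inter> cycles_through n \<beta>"
        using pq cd by (auto simp: cycles_through_def cycle3_apply intro!: cycle3_in_three_cycles)
      then show ?thesis using h pq cd by auto
    next
      assume h: "d = p \<and> c \<noteq> q"
      then have "cycle3 p q c \<in> cycles_through n \<alpha> \<inter> cycles_through n \<beta>"
        using pq cd by (auto simp: cycles_through_def cycle3_apply intro!: cycle3_in_three_cycles)
      then show ?thesis using h pq cd by auto
    qed
  next
    assume h: "cycles_through n \<alpha> \<inter> cycles_through n \<beta> \<noteq> {} \<and> \<alpha> \<noteq> \<beta>"
    then obtain s where s: "s \<in> three_cycles n" "s p = q" "s c = d"
      using pq cd by (auto simp: cycles_through_def)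
    obtain x where S: "distinct [p, q, x]" "s = cycle3 p q x"
      using three_cycle_normal_form[OF s(1), of p] s(2) pq(4) by auto
    have "c \<noteq> p" using h s pq cd by auto
    then show "(q = c \<and> d \<noteq> p) \<or> (d = p \<and> c \<noteq> q)"
      using s(3) S cd(4) unfolding S(2) cycle3_apply[OF S(1)] by (auto split: if_splits)
  qed
  finally show ?thesis .
qed

lemma permutes_restrict:
  assumes "finite A" "inj_on f A" "f ` A \<subseteq> A"
  shows "(\<lambda>x. if x \<in> A then f x else x) permutes A"
proof (rule bij_imp_permutes)
  let ?g = "\<lambda>x. if x \<in> A then f x else x"
  have "inj_on ?g A" using assms(2) by (auto simp: inj_on_def)
  moreover have "?g ` A \<subseteq> A" using assms(3) by auto
  ultimately have "?g ` A = A" using endo_inj_surj[OF assms(1)] by blast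
  with \<open>inj_on ?g A\<close> show "bij_betw ?g A A" by (simp add: bij_betw_def)
qed simp

locale arc_perm =
  fixes n :: nat and \<pi> :: "nat \<times> nat \<Rightarrow> nat \<times> nat"
  assumes five_le: "5 \<le> n"
    and maps_arcs: "\<And>\<alpha>. \<alpha> \<in> arcs n \<Longrightarrow> \<pi> \<alpha> \<in> arcs n"
    and inj: "inj_on \<pi> (arcs n)"
    and consecutive_iff: "\<And>\<alpha> \<beta>. \<alpha> \<in> arcs n \<Longrightarrow> \<beta> \<in> arcs n \<Longrightarrow>
      consecutive_arcs \<alpha> \<beta> \<longleftrightarrow> consecutive_arcs (\<pi> \<alpha>) (\<pi> \<beta>)"
    and swap_commute: "\<And>\<alpha>. \<alpha> \<in> arcs n \<Longrightarrow> \<pi> (prod.swap \<alpha>) = prod.swap (\<pi> \<alpha>)"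
begin

lemma share_end_iff:
  "\<alpha> \<in> arcs n \<Longrightarrow> \<beta> \<in> arcs n \<Longrightarrow> arcs_share_end \<alpha> \<beta> \<longleftrightarrow> arcs_share_end (\<pi> \<alpha>) (\<pi> \<beta>)"
  using arcs_share_end_iff_consecutive_swap maps_arcs consecutive_iff swap_commute swap_arcs
  by metis

lemma inj_arcsD: "\<alpha> \<in> arcs n \<Longrightarrow> \<beta> \<in> arcs n \<Longrightarrow> \<pi> \<alpha> = \<pi> \<beta> \<Longrightarrow> \<alpha> = \<beta>"
  using inj by (simp add: inj_on_def)

lemma share_end_image:
  assumes "(a, b) \<in> arcs n" "(c, d) \<in> arcs n" "(a, b) \<noteq> (c, d)" "a = c \<or> b = d"
  shows "fst (\<pi> (a, b)) = fst (\<pi> (c, d)) \<or> snd (\<pi> (a, b)) = snd (\<pi> (c, d))"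
  using share_end_iff[OF assms(1,2)] assms(3,4) by (simp add: arcs_share_end_def)

definition same_tail :: "nat \<Rightarrow> nat \<Rightarrow> nat \<Rightarrow> bool" where
  "same_tail a b c \<longleftrightarrow> fst (\<pi> (a, b)) = fst (\<pi> (a, c))"

lemma same_tail_change_head:
  assumes d: "distinct [a, b, c, d]" and r: "{a, b, c, d} \<subseteq> {1..n}"
  shows "same_tail a b c \<longleftrightarrow> same_tail a b d"
proof -
  have A: "(a, b) \<in> arcs n" "(a, c) \<in> arcs n" "(a, d) \<in> arcs n" using d r by (auto simp: arcs_def)
  have "\<pi> (a, b) \<noteq> \<pi> (a, c)" "\<pi> (a, b) \<noteq> \<pi> (a, d)" "\<pi> (a, c) \<noteq> \<pi> (a, d)"
    using inj_arcsD[OF A(1,2)] inj_arcsD[OF A(1,3)] inj_arcsD[OF A(2,3)] d by auto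
  moreover have "fst (\<pi> (a, b)) = fst (\<pi> (a, c)) \<or> snd (\<pi> (a, b)) = snd (\<pi> (a, c))"
    "fst (\<pi> (a, b)) = fst (\<pi> (a, d)) \<or> snd (\<pi> (a, b)) = snd (\<pi> (a, d))"
    "fst (\<pi> (a, c)) = fst (\<pi> (a, d)) \<or> snd (\<pi> (a, c)) = snd (\<pi> (a, d))"
    using share_end_image A d by auto
  ultimately show ?thesis unfolding same_tail_def by (metis prod.expand)
qed

lemma same_tail_change_tail:
  assumes d: "distinct [a, b, c, d]" and r: "{a, b, c, d} \<subseteq> {1..n}"
  shows "same_tail a c d \<longleftrightarrow> same_tail b c d"
proof -
  have A: "(a, c) \<in> arcs n" "(a, d) \<in> arcs n" "(b, c) \<in> arcs n" "(b, d) \<in> arcs n"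
    using d r by (auto simp: arcs_def)
  have "arcs_share_end (\<pi> (a, c)) (\<pi> (a, d))" "arcs_share_end (\<pi> (a, c)) (\<pi> (b, c))"
    "arcs_share_end (\<pi> (b, c)) (\<pi> (b, d))"
    "\<not> arcs_share_end (\<pi> (a, d)) (\<pi> (b, c))" "\<not> arcs_share_end (\<pi> (a, c)) (\<pi> (b, d))"
    using share_end_iff[OF A(1,2)] share_end_iff[OF A(1,3)] share_end_iff[OF A(3,4)]
      share_end_iff[OF A(2,3)] share_end_iff[OF A(1,4)] d
    by (simp_all add: arcs_share_end_def)
  moreover have "\<pi> (a, d) \<noteq> \<pi> (b, c)" "\<pi> (a, c) \<noteq> \<pi> (b, d)"
    using inj_arcsD[OF A(2,3)] inj_arcsD[OF A(1,4)] d by auto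
  ultimately show ?thesis unfolding same_tail_def arcs_share_end_def by metis
qed

lemma same_tail_const:
  assumes d: "distinct [a, b, c]" "distinct [a', b', c']"
    and r: "{a, b, c, a', b', c'} \<subseteq> {1..n}"
  shows "same_tail a b c \<longleftrightarrow> same_tail a' b' c'"
proof -
  have sym: "same_tail a x y \<longleftrightarrow> same_tail a y x" for a x y by (auto simp: same_tail_def)
  have step: "same_tail a x y \<longleftrightarrow> same_tail a x z"
    if "distinct [a, x, y]" "distinct [a, x, z]" "{a, x, y, z} \<subseteq> {1..n}" for a x y z
    using that same_tail_change_head[of a x y z] by (cases "y = z") auto
  have same_source: "same_tail a b c \<longleftrightarrow> same_tail a b' c'"
    if "distinct [a, b, c]" "distinct [a, b', c']" "{a, b, c, b', c'} \<subseteq> {1..n}" for a b c b' c'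
  proof (cases "b = b'")
    case True then show ?thesis using step[of a b c c'] that by auto
  next
    case False
    then show ?thesis using step[of a b c b'] sym[of a b b'] step[of a b' b c'] that by auto
  qed
  show ?thesis
  proof (cases "a = a'")
    case True then show ?thesis using same_source[of a b c b' c'] d r by auto
  next
    case False
    obtain x where x: "x \<in> {1..n}" "x \<notin> set [a, a']" using exists_fresh[of "[a, a']" n] five_le by auto
    obtain y where y: "y \<in> {1..n}" "y \<notin> set [a, a', x]" using exists_fresh[of "[a, a', x]" n] five_le by auto
    have "same_tail a b c \<longleftrightarrow> same_tail a x y" using same_source[of a b c x y] d x y r by auto
    also have "\<dots> \<longleftrightarrow> same_tail a' x y" using same_tail_change_tail[of a a' x y] x y r False by auto
    also have "\<dots> \<longleftrightarrow> same_tail a' b' c'" using same_source[of a' x y b' c'] d x y r by auto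
    finally show ?thesis .
  qed
qed

definition other :: "nat \<Rightarrow> nat" where
  "other a = (SOME b. b \<in> {1..n} \<and> b \<noteq> a)"

lemma other: "other a \<in> {1..n} \<and> other a \<noteq> a"
proof -
  have "\<exists>b. b \<in> {1..n} \<and> b \<noteq> a" using exists_fresh[of "[a]" n] five_le by auto
  then show ?thesis unfolding other_def by (rule someI_ex)
qed

definition tail_map :: "nat \<Rightarrow> nat" where
  "tail_map a = fst (\<pi> (a, other a))"

lemma tail_map_in: "a \<in> {1..n} \<Longrightarrow> tail_map a \<in> {1..n}"
  using maps_arcs[of "(a, other a)"] other[of a] by (auto simp: arcs_def tail_map_def split: prod.splits)

context
  assumes same_tail_all: "\<And>a b c. distinct [a, b, c] \<Longrightarrow> {a, b, c} \<subseteq> {1..n} \<Longrightarrow> same_tail a b c"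
begin

lemma arc_image: "(a, b) \<in> arcs n \<Longrightarrow> \<pi> (a, b) = (tail_map a, tail_map b)"
proof -
  have fst_image: "fst (\<pi> (a, b)) = tail_map a" if ab: "(a, b) \<in> arcs n" for a b
  proof (cases "b = other a")
    case False
    then have "same_tail a b (other a)"
      using ab other[of a] by (intro same_tail_all) (auto simp: arcs_def)
    then show ?thesis by (simp add: same_tail_def tail_map_def)
  qed (simp add: tail_map_def)
  assume ab: "(a, b) \<in> arcs n"
  then have "snd (\<pi> (a, b)) = fst (\<pi> (b, a))" using swap_commute[OF ab] by (metis fst_swap swap_simp)
  then show ?thesis using fst_image[OF ab] fst_image[of b a] ab
    by (simp add: prod_eq_iff arcs_def)
qed

lemma inj_on_tail_map: "inj_on tail_map {1..n}"
proof (rule inj_onI, rule ccontr)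
  fix a a' assume a: "a \<in> {1..n}" "a' \<in> {1..n}" "tail_map a = tail_map a'" "a \<noteq> a'"
  obtain b where b: "b \<in> {1..n}" "b \<notin> set [a, a']" using exists_fresh[of "[a, a']" n] five_le by auto
  have "(a, b) \<in> arcs n" "(a', b) \<in> arcs n" using a b by (auto simp: arcs_def)
  then have "(a, b) = (a', b)" using arc_image a(3) inj_arcsD by metis
  with \<open>a \<noteq> a'\<close> show False by simp
qed

lemma induced_if_same_tail:
  "\<exists>\<sigma>. \<sigma> permutes {1..n} \<and> (\<forall>a b. (a, b) \<in> arcs n \<longrightarrow> \<pi> (a, b) = (\<sigma> a, \<sigma> b))"
proof (intro exI conjI allI impI)
  show "(\<lambda>x. if x \<in> {1..n} then tail_map x else x) permutes {1..n}"
    using inj_on_tail_map tail_map_in by (intro permutes_restrict) auto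
  show "\<pi> (a, b) = ((\<lambda>x. if x \<in> {1..n} then tail_map x else x) a,
      (\<lambda>x. if x \<in> {1..n} then tail_map x else x) b)" if "(a, b) \<in> arcs n" for a b
    using arc_image[OF that] that by (auto simp: arcs_def)
qed

end

end

lemma arc_perm_swap: "arc_perm n \<pi> \<Longrightarrow> arc_perm n (prod.swap \<circ> \<pi>)"
  unfolding arc_perm_def
  by (auto simp: consecutive_arcs_swap swap_arcs intro: inj_on_imageI2 comp_inj_on)

theorem arc_perm_induced:
  assumes "arc_perm n \<pi>"
  shows "\<exists>\<sigma>. \<sigma> permutes {1..n} \<and> ((\<forall>a b. (a, b) \<in> arcs n \<longrightarrow> \<pi> (a, b) = (\<sigma> a, \<sigma> b)) \<or>
                                   (\<forall>a b. (a, b) \<in> arcs n \<longrightarrow> \<pi> (a, b) = (\<sigma> b, \<sigma> a)))"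
proof -
  interpret A: arc_perm n \<pi> by (rule assms)
  interpret B: arc_perm n "prod.swap \<circ> \<pi>" by (rule arc_perm_swap[OF assms])
  have r123: "{1, 2, 3} \<subseteq> {1..n}" using A.five_le by auto
  show ?thesis
  proof (cases "A.same_tail 1 2 3")
    case True
    then have "A.same_tail a b c" if "distinct [a, b, c]" "{a, b, c} \<subseteq> {1..n}" for a b c
      using A.same_tail_const[of 1 2 3 a b c] that r123 by auto
    then show ?thesis using A.induced_if_same_tail by blast
  next
    case False
    have "B.same_tail a b c" if d: "distinct [a, b, c]" "{a, b, c} \<subseteq> {1..n}" for a b c
    proof -
      have "\<not> A.same_tail a b c" using A.same_tail_const[of 1 2 3 a b c] False d r123 by auto
      moreover have "(a, b) \<in> arcs n" "(a, c) \<in> arcs n" using d by (auto simp: arcs_def)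
      then have "fst (\<pi> (a, b)) = fst (\<pi> (a, c)) \<or> snd (\<pi> (a, b)) = snd (\<pi> (a, c))"
        using A.share_end_image d by auto
      ultimately show ?thesis unfolding A.same_tail_def B.same_tail_def by simp
    qed
    then obtain \<sigma> where "\<sigma> permutes {1..n}"
      and "\<forall>a b. (a, b) \<in> arcs n \<longrightarrow> prod.swap (\<pi> (a, b)) = (\<sigma> a, \<sigma> b)"
      using B.induced_if_same_tail by auto
    then show ?thesis by (metis swap_simp swap_swap)
  qed
qed

section \<open>Automorphisms of the graph on the 3-cycles\<close>

locale three_cycle_graph_aut =
  fixes n :: nat and g :: "(nat \<Rightarrow> nat) \<Rightarrow> (nat \<Rightarrow> nat)"
  assumes five_le: "5 \<le> n"
    and bij: "bij_betw g (three_cycles n) (three_cycles n)"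
    and adj_iff: "\<And>s t. s \<in> three_cycles n \<Longrightarrow> t \<in> three_cycles n \<Longrightarrow> cag_adj n s t \<longleftrightarrow> cag_adj n (g s) (g t)"
begin

lemma maps_three_cycles: "s \<in> three_cycles n \<Longrightarrow> g s \<in> three_cycles n"
  using bij by (rule bij_betw_apply)

lemma inj: "inj_on g (three_cycles n)"
  using bij by (simp add: bij_betw_def)

lemma image_common_nbrs:
  assumes s: "s \<in> three_cycles n" and t: "t \<in> three_cycles n"
  shows "g ` common_nbrs n s t = common_nbrs n (g s) (g t)"
proof
  show "g ` common_nbrs n s t \<subseteq> common_nbrs n (g s) (g t)"
    using adj_iff[OF _ s] adj_iff[OF _ t] maps_three_cycles by (auto simp: common_nbrs_def)
  show "common_nbrs n (g s) (g t) \<subseteq> g ` common_nbrs n s t"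
  proof
    fix w assume w: "w \<in> common_nbrs n (g s) (g t)"
    then obtain u where u: "u \<in> three_cycles n" "w = g u"
      using bij by (auto simp: common_nbrs_def bij_betw_def)
    then show "w \<in> g ` common_nbrs n s t"
      using w adj_iff[OF u(1) s] adj_iff[OF u(1) t] by (auto simp: common_nbrs_def)
  qed
qed

lemma commutes_inv:
  assumes s: "s \<in> three_cycles n" shows "g (inv s) = inv (g s)"
proof -
  have si: "inv s \<in> three_cycles n" using three_cycles_inv[OF s] .
  have "cag_adj n s (inv s) \<and> common_nbrs n s (inv s) = {}"
    using inv_iff_no_common_nbr[OF five_le s si] by simp
  then have "cag_adj n (g s) (g (inv s)) \<and> common_nbrs n (g s) (g (inv s)) = {}"
    using adj_iff[OF s si] image_common_nbrs[OF s si] by auto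
  then show ?thesis
    using inv_iff_no_common_nbr[OF five_le maps_three_cycles[OF s] maps_three_cycles[OF si]] by simp
qed

lemma image_cycles_through:
  assumes "\<alpha> \<in> arcs n"
  shows "\<exists>\<beta>\<in>arcs n. g ` cycles_through n \<alpha> = cycles_through n \<beta>"
proof -
  obtain p q where pq: "\<alpha> = (p, q)" "p \<in> {1..n}" "q \<in> {1..n}" "p \<noteq> q"
    using assms by (auto simp: arcs_def)
  obtain x where x: "x \<in> {1..n}" "x \<notin> set [p, q]" using exists_fresh[of "[p, q]" n] five_le by auto
  obtain y where y: "y \<in> {1..n}" "y \<notin> set [p, q, x]" using exists_fresh[of "[p, q, x]" n] five_le by auto
  define s t where "s = cycle3 p q x" and "t = cycle3 p q y"
  have sK: "s \<in> cycles_through n \<alpha>" and tK: "t \<in> cycles_through n \<alpha>"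
    unfolding s_def t_def pq(1) using x y pq by (auto intro!: cycle3_in_cycles_through)
  then have s: "s \<in> three_cycles n" "s p = q" and t: "t \<in> three_cycles n" "t p = q"
    using pq(1) by (auto simp: cycles_through_def)
  have "s \<noteq> t" unfolding s_def t_def using cycle3_neq[of p q x y] x y pq by auto
  then have "cag_adj n s t" using adjacent_if_same_arc[OF s(1) t(1) s(2) t(2) pq(4)] by blast
  then have adj: "cag_adj n (g s) (g t)" using adj_iff[OF s(1) t(1)] by simp
  have "t \<noteq> inv s" unfolding s_def t_def using x y pq by (auto simp: inv_cycle3 fun_eq_iff cycle3_apply)
  then have "g t \<noteq> inv (g s)"
    using commutes_inv[OF s(1)] inj three_cycles_inv[OF s(1)] t(1) by (metis inj_onD)
  then obtain i where i: "g s i \<noteq> i" "g t i = g s i"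
    using adjacent_three_cycles_agree[OF maps_three_cycles[OF s(1)] maps_three_cycles[OF t(1)] adj] by blast
  define \<beta> where "\<beta> = (i, g s i)"
  have \<beta>: "\<beta> \<in> arcs n" "g s \<in> cycles_through n \<beta>" "g t \<in> cycles_through n \<beta>"
    using three_cycle_in_cycles_through[OF maps_three_cycles[OF s(1)] i(1)] maps_three_cycles[OF t(1)] i(2)
    by (auto simp: \<beta>_def cycles_through_def)
  have "g s \<noteq> g t" using \<open>s \<noteq> t\<close> inj s(1) t(1) by (metis inj_onD)
  then have "cycles_through n \<beta> = {g s, g t} \<union> common_nbrs n (g s) (g t)"
    using cycles_through_eq_common_nbrs[of i "g s i" n "g s" "g t"] \<beta> by (simp add: \<beta>_def)
  also have "\<dots> = g ` cycles_through n \<alpha>"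
    using cycles_through_eq_common_nbrs[of p q n s t] sK tK \<open>s \<noteq> t\<close> assms pq(1)
      image_common_nbrs[OF s(1) t(1)] by (simp add: image_Un)
  finally show ?thesis using \<beta>(1) by blast
qed

definition arc_map :: "nat \<times> nat \<Rightarrow> nat \<times> nat" where
  "arc_map \<alpha> = (SOME \<beta>. \<beta> \<in> arcs n \<and> g ` cycles_through n \<alpha> = cycles_through n \<beta>)"

lemma arc_map:
  assumes "\<alpha> \<in> arcs n"
  shows "arc_map \<alpha> \<in> arcs n \<and> g ` cycles_through n \<alpha> = cycles_through n (arc_map \<alpha>)"
  using image_cycles_through[OF assms] unfolding arc_map_def Bex_def by (rule someI_ex)

lemma arc_perm_arc_map: "arc_perm n arc_map"
proof
  show "5 \<le> n" by (rule five_le)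
  show "arc_map \<alpha> \<in> arcs n" if "\<alpha> \<in> arcs n" for \<alpha> using arc_map[OF that] by blast
  have image_eq: "g ` cycles_through n \<alpha> = g ` cycles_through n \<beta> \<longleftrightarrow> cycles_through n \<alpha> = cycles_through n \<beta>"
    for \<alpha> \<beta> using inj_on_image_eq_iff[OF inj cycles_through_subset cycles_through_subset] .
  show inj_arc_map: "inj_on arc_map (arcs n)"
  proof (rule inj_onI)
    fix \<alpha> \<beta> assume a: "\<alpha> \<in> arcs n" "\<beta> \<in> arcs n" "arc_map \<alpha> = arc_map \<beta>"
    then have "g ` cycles_through n \<alpha> = g ` cycles_through n \<beta>" using arc_map[OF a(1)] arc_map[OF a(2)] by simp
    then have "cycles_through n \<alpha> = cycles_through n \<beta>" using image_eq by blast
    then show "\<alpha> = \<beta>" using cycles_through_inj[OF five_le a(1,2)] by simp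
  qed
  show "consecutive_arcs \<alpha> \<beta> \<longleftrightarrow> consecutive_arcs (arc_map \<alpha>) (arc_map \<beta>)"
    if a: "\<alpha> \<in> arcs n" "\<beta> \<in> arcs n" for \<alpha> \<beta>
  proof -
    have "g ` (cycles_through n \<alpha> \<inter> cycles_through n \<beta>) = g ` cycles_through n \<alpha> \<inter> g ` cycles_through n \<beta>"
      by (rule inj_on_image_Int[OF inj cycles_through_subset cycles_through_subset])
    then have "cycles_through n \<alpha> \<inter> cycles_through n \<beta> \<noteq> {} \<longleftrightarrow>
        cycles_through n (arc_map \<alpha>) \<inter> cycles_through n (arc_map \<beta>) \<noteq> {}"
      using arc_map[OF a(1)] arc_map[OF a(2)] by auto
    moreover have "\<alpha> \<noteq> \<beta> \<longleftrightarrow> arc_map \<alpha> \<noteq> arc_map \<beta>" using inj_arc_map a by (auto simp: inj_on_def)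
    moreover have "arc_map \<alpha> \<in> arcs n" "arc_map \<beta> \<in> arcs n" using arc_map a by blast+
    ultimately show ?thesis
      using consecutive_arcs_iff_common_cycle[OF a] consecutive_arcs_iff_common_cycle[of "arc_map \<alpha>" n "arc_map \<beta>"]
      by simp
  qed
  show "arc_map (prod.swap \<alpha>) = prod.swap (arc_map \<alpha>)" if a: "\<alpha> \<in> arcs n" for \<alpha>
  proof -
    have ma: "arc_map \<alpha> \<in> arcs n" "arc_map (prod.swap \<alpha>) \<in> arcs n"
      using arc_map a swap_arcs by blast+
    have "cycles_through n (arc_map (prod.swap \<alpha>)) = g ` inv ` cycles_through n \<alpha>"
      using arc_map[OF swap_arcs[OF a]] by (simp add: cycles_through_swap)
    also have "\<dots> = inv ` g ` cycles_through n \<alpha>"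
      using commutes_inv cycles_through_subset by (simp add: image_image subset_iff cong: image_cong)
    also have "\<dots> = cycles_through n (prod.swap (arc_map \<alpha>))"
      using arc_map[OF a] by (simp add: cycles_through_swap)
    finally show ?thesis using cycles_through_inj[OF five_le ma(2) swap_arcs[OF ma(1)]] by simp
  qed
qed

lemma maps_arc:
  assumes "s \<in> three_cycles n" "s a \<noteq> a"
  shows "g s (fst (arc_map (a, s a))) = snd (arc_map (a, s a))"
proof -
  have "s \<in> cycles_through n (a, s a)" "(a, s a) \<in> arcs n"
    using three_cycle_in_cycles_through[OF assms] by auto
  then have "g s \<in> cycles_through n (arc_map (a, s a))" using arc_map by blast
  then show ?thesis by (simp add: cycles_through_def)
qed

lemma conj_if_arc_map:
  assumes \<sigma>: "\<sigma> permutes {1..n}" and am: "\<forall>a b. (a, b) \<in> arcs n \<longrightarrow> arc_map (a, b) = (\<sigma> a, \<sigma> b)"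
    and s: "s \<in> three_cycles n"
  shows "g s = \<sigma> \<circ> s \<circ> inv \<sigma>"
proof -
  obtain a b c where abc: "distinct [a, b, c]" "{a, b, c} \<subseteq> {1..n}" "s = cycle3 a b c"
    using s by (rule three_cyclesE) auto
  have sa: "s a = b" "s b = c" "s c = a" and m: "s a \<noteq> a" "s b \<noteq> b" "s c \<noteq> c"
    using abc by (auto simp: cycle3_apply)
  have ar: "(a, b) \<in> arcs n" "(b, c) \<in> arcs n" "(c, a) \<in> arcs n" using abc by (auto simp: arcs_def)
  have "distinct [\<sigma> a, \<sigma> b, \<sigma> c]" using abc(1) permutes_inj[OF \<sigma>] by (auto simp: inj_eq)
  moreover have "g s (\<sigma> a) = \<sigma> b" "g s (\<sigma> b) = \<sigma> c" "g s (\<sigma> c) = \<sigma> a"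
    using maps_arc[OF s m(1)] maps_arc[OF s m(2)] maps_arc[OF s m(3)] am ar unfolding sa by auto
  ultimately have "g s = cycle3 (\<sigma> a) (\<sigma> b) (\<sigma> c)" by (rule three_cycle_eqI[OF maps_three_cycles[OF s]])
  then show ?thesis using conj_cycle3[OF \<sigma> abc(1)] abc(3) by simp
qed

lemma conj_inv_if_arc_map_swapped:
  assumes \<sigma>: "\<sigma> permutes {1..n}" and am: "\<forall>a b. (a, b) \<in> arcs n \<longrightarrow> arc_map (a, b) = (\<sigma> b, \<sigma> a)"
    and s: "s \<in> three_cycles n"
  shows "g s = \<sigma> \<circ> inv s \<circ> inv \<sigma>"
proof -
  obtain a b c where abc: "distinct [a, b, c]" "{a, b, c} \<subseteq> {1..n}" "s = cycle3 a b c"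
    using s by (rule three_cyclesE) auto
  have sa: "s a = b" "s b = c" "s c = a" and m: "s a \<noteq> a" "s b \<noteq> b" "s c \<noteq> c"
    using abc by (auto simp: cycle3_apply)
  have ar: "(a, b) \<in> arcs n" "(b, c) \<in> arcs n" "(c, a) \<in> arcs n" using abc by (auto simp: arcs_def)
  have "distinct [\<sigma> a, \<sigma> c, \<sigma> b]" using abc(1) permutes_inj[OF \<sigma>] by (auto simp: inj_eq)
  moreover have "g s (\<sigma> a) = \<sigma> c" "g s (\<sigma> c) = \<sigma> b" "g s (\<sigma> b) = \<sigma> a"
    using maps_arc[OF s m(3)] maps_arc[OF s m(2)] maps_arc[OF s m(1)] am ar unfolding sa by auto
  ultimately have "g s = cycle3 (\<sigma> a) (\<sigma> c) (\<sigma> b)" by (rule three_cycle_eqI[OF maps_three_cycles[OF s]])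
  moreover have "distinct [a, c, b]" using abc(1) by auto
  ultimately show ?thesis using conj_cycle3[OF \<sigma>, of a c b] abc(1,3) inv_cycle3 by simp
qed

theorem conj_or_conj_inv:
  "\<exists>\<sigma>. \<sigma> permutes {1..n} \<and> ((\<forall>s\<in>three_cycles n. g s = \<sigma> \<circ> s \<circ> inv \<sigma>) \<or>
                              (\<forall>s\<in>three_cycles n. g s = \<sigma> \<circ> inv s \<circ> inv \<sigma>))"
proof -
  obtain \<sigma> where \<sigma>: "\<sigma> permutes {1..n}"
    and "(\<forall>a b. (a, b) \<in> arcs n \<longrightarrow> arc_map (a, b) = (\<sigma> a, \<sigma> b)) \<or>
      (\<forall>a b. (a, b) \<in> arcs n \<longrightarrow> arc_map (a, b) = (\<sigma> b, \<sigma> a))"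
    using arc_perm_induced[OF arc_perm_arc_map] by blast
  then show ?thesis using conj_if_arc_map[OF \<sigma>] conj_inv_if_arc_map_swapped[OF \<sigma>] by blast
qed

end

section \<open>Rigidity\<close>

lemma fixed_points_of_centralising_cycle3s:
  assumes \<sigma>: "\<sigma> permutes A" and d: "distinct [p, r, u, u']"
    and "\<sigma> \<circ> cycle3 p r u \<circ> inv \<sigma> = cycle3 p r u" "\<sigma> \<circ> cycle3 p r u' \<circ> inv \<sigma> = cycle3 p r u'"
  shows "\<sigma> p = p \<and> \<sigma> r = r \<and> \<sigma> u = u"
proof -
  have d1: "distinct [p, r, u]" "distinct [p, r, u']" using d by auto
  have "cycle3 (\<sigma> p) (\<sigma> r) (\<sigma> u) = cycle3 p r u" "cycle3 (\<sigma> p) (\<sigma> r) (\<sigma> u') = cycle3 p r u'"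
    using assms(3,4) conj_cycle3[OF \<sigma> d1(1)] conj_cycle3[OF \<sigma> d1(2)] by simp_all
  moreover have "distinct [\<sigma> p, \<sigma> r, \<sigma> u]" "distinct [\<sigma> p, \<sigma> r, \<sigma> u']"
    using d permutes_inj[OF \<sigma>] by (auto simp: inj_eq)
  ultimately show ?thesis
    using cycle3_eq_cases[OF d1(1), of "\<sigma> p" "\<sigma> r" "\<sigma> u"] cycle3_eq_cases[OF d1(2), of "\<sigma> p" "\<sigma> r" "\<sigma> u'"] d
    by auto
qed

lemma id_if_centralises_cycle3s:
  assumes n: "5 \<le> n" and \<sigma>: "\<sigma> permutes {1..n}" and d: "distinct [p, q, r]" "{p, q, r} \<subseteq> {1..n}"
    and fixed: "\<And>u. u \<in> {1..n} \<Longrightarrow> u \<notin> {p, q, r} \<Longrightarrow>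
        \<sigma> \<circ> cycle3 p r u \<circ> inv \<sigma> = cycle3 p r u \<and> \<sigma> \<circ> cycle3 r q u \<circ> inv \<sigma> = cycle3 r q u"
  shows "\<sigma> = id"
proof -
  have fixed_pts: "\<sigma> p = p \<and> \<sigma> r = r \<and> \<sigma> w = w" if w: "w \<in> {1..n}" "w \<notin> {p, q, r}" for w
  proof -
    obtain w' where "w' \<in> {1..n}" "w' \<notin> set [p, q, r, w]" using exists_fresh[of "[p, q, r, w]" n] n by auto
    then show ?thesis
      by (intro fixed_points_of_centralising_cycle3s[OF \<sigma>, of p r w w']) (use d w fixed in auto)
  qed
  obtain u where u: "u \<in> {1..n}" "u \<notin> set [p, q, r]" using exists_fresh[of "[p, q, r]" n] n by auto
  have pru: "\<sigma> p = p" "\<sigma> r = r" "\<sigma> u = u" using fixed_pts[of u] u by auto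
  have "\<sigma> q = q"
  proof -
    have d3: "distinct [r, q, u]" using d u by auto
    have "cycle3 r (\<sigma> q) u = cycle3 r q u" using fixed[of u] u conj_cycle3[OF \<sigma> d3] pru by simp
    then have "cycle3 r (\<sigma> q) u r = cycle3 r q u r" by simp
    moreover have "distinct [r, \<sigma> q, u]" using d3 pru permutes_inj[OF \<sigma>] by (auto simp: inj_eq)
    ultimately show ?thesis using d3 by (simp add: cycle3_apply)
  qed
  have "\<sigma> x = x" for x
  proof (cases "x \<in> {1..n}")
    case True
    then show ?thesis using fixed_pts[of x] pru \<open>\<sigma> q = q\<close> by (cases "x \<in> {p, q, r}") auto
  qed (use \<sigma> in \<open>simp add: permutes_not_in\<close>)
  then show ?thesis by (simp add: fun_eq_iff)
qed

lemma not_inverting_cycle3s: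
  assumes \<sigma>: "\<sigma> permutes A" and d: "distinct [p, q, r, u, u']"
    and "\<sigma> \<circ> inv (cycle3 p r u) \<circ> inv \<sigma> = cycle3 p r u"
    and "\<sigma> \<circ> inv (cycle3 p r u') \<circ> inv \<sigma> = cycle3 p r u'"
    and "\<sigma> \<circ> inv (cycle3 r q u) \<circ> inv \<sigma> = cycle3 r q u"
  shows False
proof -
  have d1: "distinct [p, r, u]" "distinct [p, r, u']" "distinct [r, q, u]" using d by auto
  have d2: "distinct [p, u, r]" "distinct [p, u', r]" "distinct [r, u, q]" using d by auto
  have "cycle3 (\<sigma> p) (\<sigma> u) (\<sigma> r) = cycle3 p r u" "cycle3 (\<sigma> p) (\<sigma> u') (\<sigma> r) = cycle3 p r u'"
    "cycle3 (\<sigma> r) (\<sigma> u) (\<sigma> q) = cycle3 r q u"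
    using assms(3-5) conj_cycle3[OF \<sigma> d2(1)] conj_cycle3[OF \<sigma> d2(2)] conj_cycle3[OF \<sigma> d2(3)] d1
    by (simp_all add: inv_cycle3)
  moreover have "distinct [\<sigma> p, \<sigma> u, \<sigma> r]" "distinct [\<sigma> p, \<sigma> u', \<sigma> r]" "distinct [\<sigma> r, \<sigma> u, \<sigma> q]"
    using d permutes_inj[OF \<sigma>] by (auto simp: inj_eq)
  ultimately show False
    using cycle3_eq_cases[OF d1(1), of "\<sigma> p" "\<sigma> u" "\<sigma> r"] cycle3_eq_cases[OF d1(2), of "\<sigma> p" "\<sigma> u'" "\<sigma> r"]
      cycle3_eq_cases[OF d1(3), of "\<sigma> r" "\<sigma> u" "\<sigma> q"] d
    by auto
qed

context three_cycle_graph_aut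
begin

text \<open>
  The 3-cycles \<open>(p r u)\<close> and \<open>(r q u)\<close> are those \<open>t\<close> for which \<open>t \<circ> (p q r)\<close> is again a 3-cycle;
  fixing them already forces \<open>g\<close> to be the identity.
\<close>
lemma fixes_all_if_fixes_near:
  assumes d: "distinct [p, q, r]" "{p, q, r} \<subseteq> {1..n}"
    and fixed: "\<And>u. u \<in> {1..n} \<Longrightarrow> u \<notin> {p, q, r} \<Longrightarrow>
        g (cycle3 p r u) = cycle3 p r u \<and> g (cycle3 r q u) = cycle3 r q u"
    and s: "s \<in> three_cycles n"
  shows "g s = s"
proof -
  have in3: "cycle3 p r u \<in> three_cycles n" "cycle3 r q u \<in> three_cycles n"
    if "u \<in> {1..n}" "u \<notin> {p, q, r}" for u
    using that d by (auto intro!: cycle3_in_three_cycles)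
  obtain \<sigma> where \<sigma>: "\<sigma> permutes {1..n}"
    and cs: "(\<forall>s\<in>three_cycles n. g s = \<sigma> \<circ> s \<circ> inv \<sigma>) \<or> (\<forall>s\<in>three_cycles n. g s = \<sigma> \<circ> inv s \<circ> inv \<sigma>)"
    using conj_or_conj_inv by blast
  from cs show ?thesis
  proof
    assume conj: "\<forall>s\<in>three_cycles n. g s = \<sigma> \<circ> s \<circ> inv \<sigma>"
    have "\<sigma> = id"
      by (rule id_if_centralises_cycle3s[OF five_le \<sigma> d]) (use conj fixed in3 in metis)
    then show ?thesis using conj s by simp
  next
    assume conj_inv: "\<forall>s\<in>three_cycles n. g s = \<sigma> \<circ> inv s \<circ> inv \<sigma>"
    obtain u where u: "u \<in> {1..n}" "u \<notin> set [p, q, r]" using exists_fresh[of "[p, q, r]" n] five_le by auto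
    obtain u' where u': "u' \<in> {1..n}" "u' \<notin> set [p, q, r, u]"
      using exists_fresh[of "[p, q, r, u]" n] five_le by auto
    have "distinct [p, q, r, u, u']" using d u u' by auto
    moreover have "\<sigma> \<circ> inv (cycle3 p r u) \<circ> inv \<sigma> = cycle3 p r u"
      "\<sigma> \<circ> inv (cycle3 p r u') \<circ> inv \<sigma> = cycle3 p r u'"
      "\<sigma> \<circ> inv (cycle3 r q u) \<circ> inv \<sigma> = cycle3 r q u"
      using conj_inv fixed[of u] fixed[of u'] in3[of u] in3[of u'] u u' by auto
    ultimately show ?thesis using not_inverting_cycle3s[OF \<sigma>] by blast
  qed
qed

end

section \<open>Automorphisms of \<open>CAG\<^sub>n\<close>\<close>

definition on_alt :: "nat \<Rightarrow> ((nat \<Rightarrow> nat) \<Rightarrow> (nat \<Rightarrow> nat)) \<Rightarrow> (nat \<Rightarrow> nat) \<Rightarrow> (nat \<Rightarrow> nat)" where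
  "on_alt n k x = (if x \<in> alt_group n then k x else x)"

lemma cag_autsD:
  assumes "f \<in> cag_auts n"
  shows "bij_betw f (alt_group n) (alt_group n)" "x \<notin> alt_group n \<Longrightarrow> f x = x"
    "x \<in> alt_group n \<Longrightarrow> y \<in> alt_group n \<Longrightarrow> cag_adj n x y \<longleftrightarrow> cag_adj n (f x) (f y)"
  using assms by (auto simp: graph_auts_def)

lemma cag_auts_in:
  assumes "f \<in> cag_auts n" "x \<in> alt_group n" shows "f x \<in> alt_group n"
  using cag_autsD(1)[OF assms(1)] assms(2) by (rule bij_betw_apply)

lemma cag_auts_comp:
  assumes f: "f \<in> cag_auts n" and h: "h \<in> cag_auts n"
  shows "f \<circ> h \<in> cag_auts n"
proof -
  have "bij_betw (f \<circ> h) (alt_group n) (alt_group n)"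
    using cag_autsD(1)[OF h] cag_autsD(1)[OF f] by (rule bij_betw_trans)
  moreover have "(f \<circ> h) x = x" if "x \<notin> alt_group n" for x using cag_autsD(2)[OF f that] cag_autsD(2)[OF h that] by simp
  moreover have "cag_adj n x y \<longleftrightarrow> cag_adj n ((f \<circ> h) x) ((f \<circ> h) y)"
    if "x \<in> alt_group n" "y \<in> alt_group n" for x y
    using cag_autsD(3)[OF h that] cag_autsD(3)[OF f cag_auts_in[OF h that(1)] cag_auts_in[OF h that(2)]] by simp
  ultimately show ?thesis by (simp add: graph_auts_def)
qed

lemma on_alt_in_cag_auts:
  assumes "\<And>x. x \<in> alt_group n \<Longrightarrow> k x \<in> alt_group n" "\<And>x. x \<in> alt_group n \<Longrightarrow> k' x \<in> alt_group n"
    and "\<And>x. x \<in> alt_group n \<Longrightarrow> k' (k x) = x" "\<And>x. x \<in> alt_group n \<Longrightarrow> k (k' x) = x"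
    and "\<And>x y. x \<in> alt_group n \<Longrightarrow> y \<in> alt_group n \<Longrightarrow> hamming (k x) (k y) = hamming x y"
  shows "on_alt n k \<in> cag_auts n"
proof -
  have "bij_betw (on_alt n k) (alt_group n) (alt_group n)"
    by (rule bij_betw_byWitness[where f'=k']) (use assms(1-4) in \<open>auto simp: on_alt_def\<close>)
  then show ?thesis using assms(1,5) by (simp add: graph_auts_def cag_adj_iff_hamming on_alt_def)
qed

lemma right_mult_in_cag_auts:
  assumes w: "w \<in> alt_group n"
  shows "on_alt n (\<lambda>x. x \<circ> w) \<in> cag_auts n"
proof (rule on_alt_in_cag_auts[where k'="\<lambda>x. x \<circ> inv w"])
  have "bij w" using alt_group_bij[OF w] .
  then show "x \<circ> w \<circ> inv w = x" "x \<circ> inv w \<circ> w = x" for x :: "nat \<Rightarrow> nat"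
    by (simp_all add: fun_eq_iff bij_is_surj surj_f_inv_f bij_is_inj inv_f_f)
  show "hamming (x \<circ> w) (y \<circ> w) = hamming x y" for x y :: "nat \<Rightarrow> nat"
    using hamming_comp_right[OF \<open>bij w\<close>] .
qed (use alt_group_comp alt_group_inv w in auto)

definition conj_map :: "(nat \<Rightarrow> nat) \<Rightarrow> bool \<Rightarrow> (nat \<Rightarrow> nat) \<Rightarrow> (nat \<Rightarrow> nat)" where
  "conj_map \<sigma> b x = (if b then \<sigma> \<circ> inv x \<circ> inv \<sigma> else \<sigma> \<circ> x \<circ> inv \<sigma>)"

lemma conj_map_in_alt_group: "\<sigma> permutes {1..n} \<Longrightarrow> x \<in> alt_group n \<Longrightarrow> conj_map \<sigma> b x \<in> alt_group n"
  unfolding conj_map_def using alt_group_conj alt_group_inv by auto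

lemma inv_conj:
  assumes s: "bij \<sigma>" and x: "bij x"
  shows "inv (\<sigma> \<circ> x \<circ> inv \<sigma>) = \<sigma> \<circ> inv x \<circ> inv \<sigma>"
proof (rule inv_unique_comp)
  have "\<And>z. inv \<sigma> (\<sigma> z) = z" "\<And>z. \<sigma> (inv \<sigma> z) = z" "\<And>z. inv x (x z) = z" "\<And>z. x (inv x z) = z"
    using s x by (simp_all add: bij_is_inj bij_is_surj inv_f_f surj_f_inv_f)
  then show "\<sigma> \<circ> x \<circ> inv \<sigma> \<circ> (\<sigma> \<circ> inv x \<circ> inv \<sigma>) = id" "\<sigma> \<circ> inv x \<circ> inv \<sigma> \<circ> (\<sigma> \<circ> x \<circ> inv \<sigma>) = id"
    by (simp_all add: fun_eq_iff)
qed

lemma conj_map_id: "bij \<sigma> \<Longrightarrow> conj_map \<sigma> b id = id"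
  by (simp add: conj_map_def fun_eq_iff bij_is_surj surj_f_inv_f)

lemma conj_map_inv:
  assumes \<sigma>: "\<sigma> permutes {1..n}" and x: "x \<in> alt_group n"
  shows "conj_map (inv \<sigma>) b (conj_map \<sigma> b x) = x"
proof -
  have bs: "bij \<sigma>" using \<sigma> by (rule permutes_bij)
  have bx: "bij x" using alt_group_bij[OF x] .
  have ii: "inv (inv \<sigma>) = \<sigma>" using bs by (simp add: inv_inv_eq)
  have a: "\<And>z. inv \<sigma> (\<sigma> z) = z" "\<And>z. \<sigma> (inv \<sigma> z) = z"
    using bs by (simp_all add: bij_is_inj bij_is_surj inv_f_f surj_f_inv_f)
  show ?thesis
  proof (cases b)
    case True
    have "inv (\<sigma> \<circ> inv x \<circ> inv \<sigma>) = \<sigma> \<circ> x \<circ> inv \<sigma>"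
      using inv_conj[OF bs bij_imp_bij_inv[OF bx]] bx by (simp add: inv_inv_eq)
    then show ?thesis using True unfolding conj_map_def ii by (simp add: fun_eq_iff a)
  qed (simp add: conj_map_def ii fun_eq_iff a)
qed

lemma conj_map_in_cag_auts:
  assumes \<sigma>: "\<sigma> permutes {1..n}"
  shows "on_alt n (conj_map \<sigma> b) \<in> cag_auts n"
proof (rule on_alt_in_cag_auts[where k'="conj_map (inv \<sigma>) b"])
  have \<sigma>': "inv \<sigma> permutes {1..n}" using \<sigma> by (rule permutes_inv)
  show "conj_map \<sigma> b (conj_map (inv \<sigma>) b x) = x" if "x \<in> alt_group n" for x
    using conj_map_inv[OF \<sigma>' that] permutes_bij[OF \<sigma>] by (simp add: inv_inv_eq)
  show "hamming (conj_map \<sigma> b x) (conj_map \<sigma> b y) = hamming x y"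
    if "x \<in> alt_group n" "y \<in> alt_group n" for x y
    using hamming_conj[OF permutes_bij[OF \<sigma>]] hamming_inv[OF alt_group_bij alt_group_bij, OF that]
    by (simp add: conj_map_def)
qed (use conj_map_in_alt_group[OF \<sigma>] conj_map_in_alt_group[OF permutes_inv[OF \<sigma>]] conj_map_inv[OF \<sigma>]
     in auto)


lemma stabiliser_three_cycle_graph_aut:
  assumes n: "5 \<le> n" and f: "f \<in> cag_auts n" and f1: "f id = id"
  shows "three_cycle_graph_aut n f"
proof
  have bij: "bij_betw f (alt_group n) (alt_group n)" using cag_autsD(1)[OF f] .
  have nbr: "y \<in> three_cycles n \<longleftrightarrow> y \<in> alt_group n \<and> cag_adj n id y" for y
    using three_cycle_in_alt_group by (auto simp: cay_adj_def)
  have iff: "f y \<in> three_cycles n \<longleftrightarrow> y \<in> three_cycles n" if "y \<in> alt_group n" for y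
    using nbr cag_autsD(3)[OF f id_in_alt_group that] f1 cag_auts_in[OF f that] that by auto
  have "inj_on f (three_cycles n)"
    using bij_betw_imp_inj_on[OF bij] inj_on_subset three_cycle_in_alt_group by blast
  moreover have "f ` three_cycles n = three_cycles n"
  proof
    show "f ` three_cycles n \<subseteq> three_cycles n" using iff three_cycle_in_alt_group by auto
    show "three_cycles n \<subseteq> f ` three_cycles n"
    proof
      fix z assume z: "z \<in> three_cycles n"
      then obtain y where "y \<in> alt_group n" "z = f y"
        using bij_betw_imp_surj_on[OF bij] three_cycle_in_alt_group by (metis imageE)
      then show "z \<in> f ` three_cycles n" using iff z by auto
    qed
  qed
  ultimately show "bij_betw f (three_cycles n) (three_cycles n)" by (simp add: bij_betw_def)
  show "cag_adj n s t \<longleftrightarrow> cag_adj n (f s) (f t)" if "s \<in> three_cycles n" "t \<in> three_cycles n" for s t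
    using cag_autsD(3)[OF f] three_cycle_in_alt_group that by blast
qed (rule n)

lemma conj_right_mult_in_cag_auts:
  assumes h: "h \<in> cag_auts n" and y: "y \<in> alt_group n"
  shows "on_alt n (\<lambda>z. h (z \<circ> y) \<circ> inv y) \<in> cag_auts n"
proof -
  have "on_alt n (\<lambda>z. h (z \<circ> y) \<circ> inv y) = on_alt n (\<lambda>x. x \<circ> inv y) \<circ> h \<circ> on_alt n (\<lambda>x. x \<circ> y)"
  proof
    fix z show "on_alt n (\<lambda>z. h (z \<circ> y) \<circ> inv y) z = (on_alt n (\<lambda>x. x \<circ> inv y) \<circ> h \<circ> on_alt n (\<lambda>x. x \<circ> y)) z"
    proof (cases "z \<in> alt_group n")
      case True
      then show ?thesis using cag_auts_in[OF h alt_group_comp[OF True y]] by (simp add: on_alt_def alt_group_comp y)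
    qed (simp add: on_alt_def cag_autsD(2)[OF h])
  qed
  then show ?thesis by (simp add: cag_auts_comp right_mult_in_cag_auts h y alt_group_inv)
qed

lemma rigid_step:
  assumes n: "5 \<le> n" and h: "h \<in> cag_auts n" and x: "x \<in> alt_group n" and c: "c \<in> three_cycles n"
    and fixed: "\<forall>s\<in>three_cycles n. h (s \<circ> x) = s \<circ> x"
  shows "\<forall>s\<in>three_cycles n. h (s \<circ> (c \<circ> x)) = s \<circ> (c \<circ> x)"
proof -
  define y where "y = c \<circ> x"
  have y: "y \<in> alt_group n" unfolding y_def using alt_group_comp[OF three_cycle_in_alt_group[OF c] x] .
  have yinv: "y \<circ> inv y = id" "inv y \<circ> y = id"
    using alt_group_bij[OF y] by (simp_all add: fun_eq_iff bij_is_surj surj_f_inv_f bij_is_inj inv_f_f)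
  define h' where "h' = on_alt n (\<lambda>z. h (z \<circ> y) \<circ> inv y)"
  have h': "h' \<in> cag_auts n" unfolding h'_def using conj_right_mult_in_cag_auts[OF h y] .
  have "h y = y" using fixed c unfolding y_def by blast
  then have "h' id = id" using yinv id_in_alt_group by (simp add: h'_def on_alt_def)
  then interpret three_cycle_graph_aut n h' by (rule stabiliser_three_cycle_graph_aut[OF n h'])
  have fixed': "h' t = t" if "t \<in> three_cycles n" "t \<circ> c \<in> three_cycles n" for t
  proof -
    have "h (t \<circ> y) = t \<circ> y" using fixed that(2) unfolding y_def by (simp add: o_assoc)
    then show ?thesis using three_cycle_in_alt_group[OF that(1)] yinv
      by (simp add: h'_def on_alt_def o_assoc[symmetric])
  qed
  obtain p q r where pqr: "distinct [p, q, r]" "{p, q, r} \<subseteq> {1..n}" "c = cycle3 p q r"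
    using c by (rule three_cyclesE) auto
  have "h' (cycle3 p r u) = cycle3 p r u \<and> h' (cycle3 r q u) = cycle3 r q u"
    if u: "u \<in> {1..n}" "u \<notin> {p, q, r}" for u
  proof -
    have d: "distinct [p, q, r, u]" using pqr u by auto
    then have "cycle3 p r u \<circ> c = cycle3 p q u" "cycle3 r q u \<circ> c = cycle3 p u r"
      using pqr(3) by (auto simp: fun_eq_iff cycle3_apply)
    then show ?thesis using d pqr u by (auto intro!: fixed' cycle3_in_three_cycles)
  qed
  then have h'_fix: "h' s = s" if "s \<in> three_cycles n" for s
    using fixes_all_if_fixes_near[OF pqr(1,2)] that by blast
  have "h (s \<circ> y) = s \<circ> y" if s: "s \<in> three_cycles n" for s
  proof -
    have "h (s \<circ> y) \<circ> inv y = s"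
      using h'_fix[OF s] three_cycle_in_alt_group[OF s] by (simp add: h'_def on_alt_def)
    then have "h (s \<circ> y) \<circ> (inv y \<circ> y) = s \<circ> y" by (simp add: o_assoc)
    then show ?thesis using yinv(2) by simp
  qed
  then show ?thesis by (simp add: y_def)
qed

lemma alt_group_decompose:
  assumes x: "x \<in> alt_group n" and ne: "x \<noteq> id"
  shows "\<exists>c\<in>three_cycles n. \<exists>x'\<in>alt_group n. x = c \<circ> x' \<and> card {i. x' i \<noteq> i} < card {i. x i \<noteq> i}"
proof -
  let ?D = "{i. x i \<noteq> i}"
  have xp: "x permutes {1..n}" using alt_group_permutes[OF x] .
  have D_sub: "?D \<subseteq> {1..n}" using xp by (auto simp: permutes_def)
  have inj: "inj x" using permutes_inj[OF xp] .
  obtain i where i: "x i \<noteq> i" using ne by (auto simp: fun_eq_iff)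
  define j where "j = x i"
  have ji: "j \<noteq> i" "x j \<noteq> j" using i inj unfolding j_def by (auto dest: injD)
  have "\<exists>k. x k \<noteq> k \<and> k \<noteq> i \<and> k \<noteq> j"
  proof (rule ccontr)
    assume "\<not> ?thesis"
    then have only: "\<And>k. x k \<noteq> k \<Longrightarrow> k = i \<or> k = j" by blast
    have "x (x j) \<noteq> x j" using ji inj by (auto dest: injD)
    then have "x j = i" using only ji by blast
    then have "x = transpose i j" using only ji by (auto simp: fun_eq_iff j_def transpose_def)
    then show False using x ji by (simp add: alt_group_def evenperm_swap)
  qed
  then obtain k where k: "x k \<noteq> k" "k \<noteq> i" "k \<noteq> j" by blast
  have dc: "distinct [j, i, k]" using ji k by auto
  define c where "c = cycle3 j i k"
  have c: "c \<in> three_cycles n"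
    unfolding c_def using dc D_sub i ji k by (intro cycle3_in_three_cycles) auto
  define x' where "x' = c \<circ> x"
  have "x' \<in> alt_group n" unfolding x'_def using alt_group_comp[OF three_cycle_in_alt_group[OF c] x] .
  moreover have "x = inv c \<circ> x'"
    unfolding x'_def using alt_group_bij[OF three_cycle_in_alt_group[OF c]]
    by (simp add: fun_eq_iff bij_is_inj inv_f_f)
  moreover have "card {m. x' m \<noteq> m} < card ?D"
  proof -
    have "{m. x' m \<noteq> m} \<subseteq> ?D - {i}"
    proof
      fix m assume m: "m \<in> {m. x' m \<noteq> m}"
      have "m \<noteq> i" using m dc by (auto simp: x'_def c_def cycle3_apply j_def)
      moreover have "x m \<noteq> m"
      proof
        assume xm: "x m = m"
        then have "m \<noteq> j" "m \<noteq> k" using ji k by auto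
        then show False using m xm \<open>m \<noteq> i\<close> dc by (simp add: x'_def c_def cycle3_apply)
      qed
      ultimately show "m \<in> ?D - {i}" by blast
    qed
    then have "card {m. x' m \<noteq> m} \<le> card (?D - {i})"
      using finite_subset[OF D_sub] by (intro card_mono) auto
    also have "\<dots> < card ?D" using finite_subset[OF D_sub] i by (intro card_Diff1_less) auto
    finally show ?thesis .
  qed
  ultimately show ?thesis using three_cycles_inv[OF c] by blast
qed

lemma rigid:
  assumes n: "5 \<le> n" and h: "h \<in> cag_auts n" and h1: "h id = id"
    and fixed: "\<forall>s\<in>three_cycles n. h s = s" and x: "x \<in> alt_group n"
  shows "h x = x \<and> (\<forall>s\<in>three_cycles n. h (s \<circ> x) = s \<circ> x)"
  using x
proof (induction "card {i. x i \<noteq> i}" arbitrary: x rule: less_induct)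
  case less
  show ?case
  proof (cases "x = id")
    case False
    then obtain c x' where cx: "c \<in> three_cycles n" "x' \<in> alt_group n" "x = c \<circ> x'"
      "card {i. x' i \<noteq> i} < card {i. x i \<noteq> i}" using alt_group_decompose[OF less.prems] by blast
    then have "h x' = x' \<and> (\<forall>s\<in>three_cycles n. h (s \<circ> x') = s \<circ> x')" using less.hyps by blast
    then show ?thesis using rigid_step[OF n h cx(2) cx(1)] cx(1,3) by simp
  qed (use h1 fixed in simp)
qed

lemma cag_aut_stabiliser:
  assumes n: "5 \<le> n" and f: "f \<in> cag_auts n" and f1: "f id = id"
  shows "\<exists>\<sigma> b. \<sigma> permutes {1..n} \<and> (\<forall>x\<in>alt_group n. f x = conj_map \<sigma> b x)"
proof -
  interpret three_cycle_graph_aut n f by (rule stabiliser_three_cycle_graph_aut[OF n f f1])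
  obtain \<sigma> b where \<sigma>: "\<sigma> permutes {1..n}" and fs: "\<forall>s\<in>three_cycles n. f s = conj_map \<sigma> b s"
    using conj_or_conj_inv unfolding conj_map_def by (metis (full_types))
  have \<sigma>': "inv \<sigma> permutes {1..n}" using \<sigma> by (rule permutes_inv)
  have ii: "inv (inv \<sigma>) = \<sigma>" using permutes_bij[OF \<sigma>] by (simp add: inv_inv_eq)
  define k where "k = on_alt n (conj_map (inv \<sigma>) b) \<circ> f"
  have "k \<in> cag_auts n" unfolding k_def by (intro cag_auts_comp conj_map_in_cag_auts \<sigma>' f)
  moreover have "k id = id"
    using f1 id_in_alt_group conj_map_id[OF permutes_bij[OF \<sigma>']] by (simp add: k_def on_alt_def)
  moreover have "\<forall>s\<in>three_cycles n. k s = s"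
    using fs maps_three_cycles three_cycle_in_alt_group conj_map_inv[OF \<sigma>]
    by (simp add: k_def on_alt_def)
  ultimately have k_fix: "k x = x" if "x \<in> alt_group n" for x using rigid[OF n _ _ _ that] by blast
  then have "f x = conj_map \<sigma> b x" if "x \<in> alt_group n" for x
  proof -
    have "conj_map (inv \<sigma>) b (f x) = x"
      using k_fix[OF that] cag_auts_in[OF f that] by (simp add: k_def on_alt_def)
    then show ?thesis using conj_map_inv[OF \<sigma>' cag_auts_in[OF f that], of b] ii by simp
  qed
  then show ?thesis using \<sigma> by blast
qed

text \<open>
  Every automorphism is \<open>x \<mapsto> \<sigma> x \<sigma>\<^sup>-\<^sup>1 w\<close> or \<open>x \<mapsto> \<sigma> x\<^sup>-\<^sup>1 \<sigma>\<^sup>-\<^sup>1 w\<close> with \<open>w\<close> even.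
  Writing \<open>\<tau> = \<sigma>\<^sup>-\<^sup>1 w\<close> and, in the second case, replacing \<open>\<sigma>\<close> by \<open>\<sigma> (1 2)\<close>, both are
  recovered from the pair \<open>(\<sigma>, \<tau>)\<close>: the parity of \<open>\<sigma> \<tau>\<close> tells the two cases apart.
\<close>
definition aut_of_pair :: "nat \<Rightarrow> (nat \<Rightarrow> nat) \<times> (nat \<Rightarrow> nat) \<Rightarrow> (nat \<Rightarrow> nat) \<Rightarrow> (nat \<Rightarrow> nat)" where
  "aut_of_pair n st = on_alt n (\<lambda>x. if evenperm (fst st \<circ> snd st) then fst st \<circ> x \<circ> snd st
       else fst st \<circ> transpose 1 2 \<circ> inv x \<circ> snd st)"

lemma cag_auts_subset_aut_of_pair:
  assumes n: "5 \<le> n" and f: "f \<in> cag_auts n"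
  shows "f \<in> aut_of_pair n ` ({\<sigma>. \<sigma> permutes {1..n}} \<times> {\<tau>. \<tau> permutes {1..n}})"
proof -
  define w where "w = f id"
  have w: "w \<in> alt_group n" unfolding w_def by (rule cag_auts_in[OF f id_in_alt_group])
  have winv: "w \<circ> inv w = id" "inv w \<circ> w = id"
    using alt_group_bij[OF w] by (simp_all add: fun_eq_iff bij_is_surj surj_f_inv_f bij_is_inj inv_f_f)
  define g where "g = on_alt n (\<lambda>x. x \<circ> inv w) \<circ> f"
  have g: "g \<in> cag_auts n" unfolding g_def by (intro cag_auts_comp right_mult_in_cag_auts alt_group_inv w f)
  have gx: "g x = f x \<circ> inv w" if "x \<in> alt_group n" for x
    using cag_auts_in[OF f that] by (simp add: g_def on_alt_def)
  have "g id = id" using gx[OF id_in_alt_group] winv by (simp add: w_def)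
  then obtain \<sigma> b where \<sigma>: "\<sigma> permutes {1..n}" and gc: "\<forall>x\<in>alt_group n. g x = conj_map \<sigma> b x"
    using cag_aut_stabiliser[OF n g] by blast
  have fx: "f x = conj_map \<sigma> b x \<circ> w" if "x \<in> alt_group n" for x
  proof -
    have "f x \<circ> (inv w \<circ> w) = conj_map \<sigma> b x \<circ> w" using gc gx[OF that] that by (simp add: o_assoc)
    then show ?thesis using winv(2) by simp
  qed
  have fo: "f x = x" if "x \<notin> alt_group n" for x using cag_autsD(2)[OF f that] .
  define \<tau> where "\<tau> = inv \<sigma> \<circ> w"
  have \<tau>: "\<tau> permutes {1..n}" unfolding \<tau>_def using permutes_inv[OF \<sigma>] alt_group_permutes[OF w]
    by (rule permutes_compose[rotated])
  have st: "\<sigma> \<circ> \<tau> = w" unfolding \<tau>_def using permutes_bij[OF \<sigma>]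
    by (simp add: fun_eq_iff bij_is_surj surj_f_inv_f)
  have ew: "evenperm w" using w by (simp add: alt_group_def)
  show ?thesis
  proof (cases b)
    case False
    have "f = aut_of_pair n (\<sigma>, \<tau>)"
    proof
      fix x show "f x = aut_of_pair n (\<sigma>, \<tau>) x"
        using fx[of x] fo[of x] st ew False by (simp add: aut_of_pair_def on_alt_def conj_map_def \<tau>_def o_assoc)
    qed
    then show ?thesis using \<sigma> \<tau> by blast
  next
    case True
    define \<sigma>' where "\<sigma>' = \<sigma> \<circ> transpose 1 2"
    have \<sigma>': "\<sigma>' permutes {1..n}" unfolding \<sigma>'_def using n
      by (intro permutes_compose[OF permutes_swap_id \<sigma>]) auto
    have p\<sigma>: "permutation \<sigma>" using \<sigma> by (auto intro: permutes_imp_permutation)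
    have "\<sigma>' \<circ> \<tau> = (\<sigma> \<circ> transpose 1 2 \<circ> inv \<sigma>) \<circ> w" by (simp add: \<sigma>'_def \<tau>_def o_assoc)
    moreover have "\<not> evenperm (\<sigma> \<circ> transpose 1 2 \<circ> inv \<sigma>)"
      using evenperm_conj[OF p\<sigma> permutation_swap_id] by (simp add: evenperm_swap)
    moreover have "permutation (\<sigma> \<circ> transpose 1 2 \<circ> inv \<sigma>)"
      using p\<sigma> by (simp add: permutation_compose permutation_inverse permutation_swap_id)
    ultimately have odd: "\<not> evenperm (\<sigma>' \<circ> \<tau>)"
      using ew alt_group_permutation[OF w] by (simp add: evenperm_comp)
    have "f = aut_of_pair n (\<sigma>', \<tau>)"
    proof
      fix x show "f x = aut_of_pair n (\<sigma>', \<tau>) x"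
      proof (cases "x \<in> alt_group n")
        case True
        have "\<sigma>' \<circ> transpose 1 2 \<circ> inv x \<circ> \<tau> = conj_map \<sigma> True x \<circ> w"
          by (simp add: \<sigma>'_def \<tau>_def conj_map_def fun_eq_iff transpose_def)
        then show ?thesis using fx[OF True] odd \<open>b\<close> True by (simp add: aut_of_pair_def on_alt_def)
      qed (simp add: fo aut_of_pair_def on_alt_def)
    qed
    then show ?thesis using \<sigma>' \<tau> by blast
  qed
qed

theorem corollary3p1:
  fixes n :: nat
  assumes "n \<ge> 5"
  shows "card (graph_auts (alt_group n) (cay_adj (three_cycles n))) \<le> (fact n)^2"
proof -
  let ?P = "{\<sigma>. \<sigma> permutes {1..n}}"
  have "finite ?P" by (rule finite_permutations) simp
  have "card (cag_auts n) \<le> card (aut_of_pair n ` (?P \<times> ?P))"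
    by (rule card_mono) (use \<open>finite ?P\<close> cag_auts_subset_aut_of_pair[OF assms] in auto)
  also have "\<dots> \<le> card (?P \<times> ?P)" by (rule card_image_le) (use \<open>finite ?P\<close> in simp)
  also have "\<dots> = (fact n)^2" by (simp add: card_cartesian_product card_permutations power2_eq_square)
  finally show ?thesis .
qed

end
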